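(* Let $(x_{ij})$ lie in the polytope of the second level Poisson Matching LP, and let $f:[0,1]^2\to\mathbb{R}$ be normalized and DR submodular. Fix $j_1\ne j_2\in J$, with $x_{j}=\sum_ix_{ij}$. Let $\lambda_1^*,\lambda_2^*\ge0$ be the unique solution of \[ x_{j_1}=1-P_0(\lambda_1^* ),\qquad x_{j_2}=\big(2-P_0(\lambda_2^* )-P_1(\lambda_2^* )\big)-\big(1-P_0(\min\{\lambda_1^*,\lambda_2^*\})\big). \] With $\rho_{ij}=x_{ij}/\lambda_i$, the following holds. If $\lambda_1^*\le\lambda_2^*$, then \[ \sum_{i\in I}\lambda_i f(\rho_{ij_1},\rho_{ij_1}+\rho_{ij_2})\ge\int_0^{\lambda_1^*}f(P_0(\lambda),P_1(\lambda))\,d\lambda+\int_{\lambda_1^*}^{\lambda_2^*}f(0,P_1(\lambda))\,d\lambda . \] If $\lambda_1^*>\lambda_2^*$, then \[ \sum_{i\in I}\lambda_i f(\rho_{ij_1},\rho_{ij_1}+\rho_{ij_2})\ge\int_0^{\lambda_2^*}f(P_0(\lambda),P_1(\lambda))\,d\lambda+\int_{\lambda_2^*}^{\lambda_1^*}f(P_0(\lambda),P_0(\lambda))\,d\lambda . \]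
   Context: $I$ is a finite set of online types with rates $\lambda_i>0$, $J$ a finite set of offline vertices, and $E\subseteq I\times J$ the edges, with $x_{ij}=0$ for non-edges. $\lambda_S=\sum_{i\in S}\lambda_i$ and $P_k(\lambda)=e^{-\lambda}\sum_{m=0}^k\lambda^m/m!$. The polytope of the second level Poisson Matching LP is the set of $x\ge0$ with: - $\sum_jx_{ij}\le\lambda_i$ for all $i$; - $\sum_{i\in S}x_{ij}\le1-P_0(\lambda_S)$ for all $S\subseteq I$ and $j\in J$; - $\sum_{i\in S}(x_{ij}+x_{ij'})\le(1-P_0(\lambda_S))+(1-P_1(\lambda_S))$ for all $S\subseteq I$ and distinct $j,j'\in J$. A smooth $f:[0,1]^2\to\mathbb{R}$ is DR submodular if all entries of its Hessian are $\le0$ everywhere. It is normalized if $f(0,0)=0$. *)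

theory Defs
  imports "HOL-Analysis.Analysis"
begin

definition poissonP :: "nat \<Rightarrow> real \<Rightarrow> real" where
  "poissonP k l = exp (- l) * (\<Sum>m\<le>k. l ^ m / fact m)"

definition in_PM2_polytope ::
  "'i set \<Rightarrow> 'j set \<Rightarrow> ('i \<times> 'j) set \<Rightarrow> ('i \<Rightarrow> real) \<Rightarrow> ('i \<Rightarrow> 'j \<Rightarrow> real) \<Rightarrow> bool" where
  "in_PM2_polytope I J E lam x \<longleftrightarrow>
     (\<forall>i\<in>I. \<forall>j\<in>J. x i j \<ge> 0) \<and>
     (\<forall>i\<in>I. \<forall>j\<in>J. (i, j) \<notin> E \<longrightarrow> x i j = 0) \<and>
     (\<forall>i\<in>I. (\<Sum>j\<in>J. x i j) \<le> lam i) \<and>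
     (\<forall>S\<subseteq>I. \<forall>j\<in>J. (\<Sum>i\<in>S. x i j) \<le> 1 - poissonP 0 (\<Sum>i\<in>S. lam i)) \<and>
     (\<forall>S\<subseteq>I. \<forall>j\<in>J. \<forall>j'\<in>J. j \<noteq> j' \<longrightarrow>
        (\<Sum>i\<in>S. x i j + x i j') \<le>
          (1 - poissonP 0 (\<Sum>i\<in>S. lam i)) + (1 - poissonP 1 (\<Sum>i\<in>S. lam i)))"

text \<open>Smooth (here: C^2 on the closed unit square, derivatives taken within the square)
  DR-submodular function: all entries of the Hessian are nonpositive everywhere on the square.\<close>
definition dr_submodular :: "(real \<times> real \<Rightarrow> real) \<Rightarrow> bool" where
  "dr_submodular f \<longleftrightarrow>
    (\<exists>f1 f2 f11 f12 f21 f22 :: real \<times> real \<Rightarrow> real.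
      (\<forall>p\<in>{0..1::real} \<times> {0..1::real}.
         (f has_derivative (\<lambda>(h, k). f1 p * h + f2 p * k)) (at p within {0..1} \<times> {0..1}) \<and>
         (f1 has_derivative (\<lambda>(h, k). f11 p * h + f12 p * k)) (at p within {0..1} \<times> {0..1}) \<and>
         (f2 has_derivative (\<lambda>(h, k). f21 p * h + f22 p * k)) (at p within {0..1} \<times> {0..1}) \<and>
         f11 p \<le> 0 \<and> f12 p \<le> 0 \<and> f21 p \<le> 0 \<and> f22 p \<le> 0) \<and>
      continuous_on ({0..1} \<times> {0..1}) f11 \<and> continuous_on ({0..1} \<times> {0..1}) f12 \<and>
      continuous_on ({0..1} \<times> {0..1}) f21 \<and> continuous_on ({0..1} \<times> {0..1}) f22)"

definition normalized :: "(real \<times> real \<Rightarrow> real) \<Rightarrow> bool" where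
  "normalized f \<longleftrightarrow> f (0, 0) = 0"

end

theory Submission
  imports Defs
begin

text \<open>For a DR-submodular \<open>f\<close> and a monotone curve \<open>(h, k)\<close> through the unit square, the separable
  function \<open>F1 h a + F2 k b\<close>, obtained by integrating \<open>\<partial>\<^sub>1f\<close> and \<open>\<partial>\<^sub>2f\<close> along the curve, is a lower
  bound for \<open>f (a, b)\<close> that is tight on the curve, and both summands are concave. The polytope
  constraints say that the weighted points \<open>\<rho>\<^sub>i\<^sub>j\<^sub>1\<close> and \<open>\<rho>\<^sub>i\<^sub>j\<^sub>1 + \<rho>\<^sub>i\<^sub>j\<^sub>2\<close> are majorized by the
  Poisson profiles \<open>\<lambda> \<mapsto> P\<^sub>0(\<lambda>)\<close> and \<open>\<lambda> \<mapsto> P\<^sub>1(\<lambda>)\<close> (cut off at \<open>\<lambda>\<^sub>1\<^sup>*\<close>, \<open>\<lambda>\<^sub>2\<^sup>*\<close>), so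
  Karamata-type majorization bounds each concave sum below by the integral along the profile.
  Choosing the curve through the profile points -- the graph of \<open>P\<^sub>1\<close> as a function of \<open>P\<^sub>0\<close>,
  joined to the origin along the \<open>b\<close>-axis when \<open>\<lambda>\<^sub>1\<^sup>* \<le> \<lambda>\<^sub>2\<^sup>*\<close> and along the diagonal
  otherwise -- turns the two integrals back into the integral of \<open>f\<close> along the profile.\<close>

lemma integrable_on_antimono_on:
  fixes g :: "real \<Rightarrow> real"
  assumes "antimono_on {a..b} g"
  shows "g integrable_on {a..b}"
proof -
  have "mono_on {a..b} (\<lambda>x. - g x)" using assms by (auto simp: monotone_on_def)
  then show ?thesis using integrable_neg[OF integrable_on_mono_on] by fastforce
qed

lemma integral_le_on_interior:
  fixes g g' :: "real \<Rightarrow> real"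
  assumes "g integrable_on {u..v}" "g' integrable_on {u..v}" "\<And>x. x \<in> {u<..<v} \<Longrightarrow> g x \<le> g' x"
  shows "integral {u..v} g \<le> integral {u..v} g'"
proof -
  let ?g = "\<lambda>x. if x = u \<or> x = v then g' x else g x"
  have "integral {u..v} g = integral {u..v} ?g"
    by (rule integral_spike[of "{u, v}"]) auto
  also have "\<dots> \<le> integral {u..v} g'"
  proof (rule integral_le)
    show "?g integrable_on {u..v}"
      by (rule integrable_spike_finite[of "{u, v}", OF _ _ assms(1)]) auto
  qed (use assms in auto)
  finally show ?thesis .
qed

lemma integral_cong_on_interior:
  fixes g g' :: "real \<Rightarrow> real"
  assumes "\<And>t. t \<in> {u<..<v} \<Longrightarrow> g t = g' t"
  shows "integral {u..v} g = integral {u..v} g'"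
  by (rule integral_spike[of "{u, v}"]) (use assms in auto)

lemma integral_split3:
  fixes g :: "real \<Rightarrow> real"
  assumes "g integrable_on {a..b}" "a \<le> c" "c \<le> d" "d \<le> b"
  shows "integral {a..b} g = integral {a..c} g + integral {c..d} g + integral {d..b} g"
proof -
  have "g integrable_on {a..d}" by (rule integrable_subinterval_real[OF assms(1)]) (use assms in auto)
  then show ?thesis
    using Henstock_Kurzweil_Integration.integral_combine[OF _ _ assms(1), of d]
      Henstock_Kurzweil_Integration.integral_combine[of a c d g] assms by auto
qed

lemma integral_antimono_supergradient:
  fixes c :: "real \<Rightarrow> real"
  assumes "antimono_on {a..b} c" "x \<in> {a..b}" "y \<in> {a..b}"
  shows "integral {a..y} c \<le> integral {a..x} c + c x * (y - x)"
proof -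
  have int: "c integrable_on {s..t}" if "a \<le> s" "t \<le> b" for s t
    by (rule integrable_subinterval_real[OF integrable_on_antimono_on[OF assms(1)]]) (use that in auto)
  have split: "integral {a..t} c = integral {a..s} c + integral {s..t} c" if "a \<le> s" "s \<le> t" "t \<le> b" for s t
    using Henstock_Kurzweil_Integration.integral_combine[OF that(1,2) int] that by auto
  show ?thesis
  proof (cases "x \<le> y")
    case True
    have "integral {x..y} c \<le> integral {x..y} (\<lambda>_. c x)"
      using assms True by (intro integral_le int) (auto simp: monotone_on_def)
    then show ?thesis using split[of x y] True assms by (simp add: mult.commute)
  next
    case False
    have "integral {y..x} (\<lambda>_. c x) \<le> integral {y..x} c"
      using assms False by (intro integral_le int) (auto simp: monotone_on_def)
    then show ?thesis using split[of y x] False assms by (simp add: algebra_simps)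
  qed
qed

lemma integral_has_real_derivative_at:
  fixes g :: "real \<Rightarrow> real"
  assumes "g integrable_on {a..b}" "x \<in> {a<..<b}" "isCont g x"
  shows "((\<lambda>u. integral {a..u} g) has_real_derivative g x) (at x)"
proof -
  have x: "x \<in> {a..b} - {}" using assms(2) by auto
  have "continuous (at x within {a..b} - {}) g"
    using assms(3) by (rule continuous_at_imp_continuous_at_within)
  from integral_has_vector_derivative_continuous_at[OF assms(1) x finite.emptyI this]
  have "((\<lambda>u. integral {a..u} g) has_vector_derivative g x) (at x within {a..b})"
    by (simp only: Diff_empty)
  moreover have "at x within {a..b} = at x" using assms(2) by (intro at_within_interior) simp
  ultimately show ?thesis
    by (simp add: has_real_derivative_iff_has_vector_derivative)
qed

lemma has_integral_if_le:
  fixes q r :: "real \<Rightarrow> real"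
  assumes "(q has_integral A) {u..c}" "(r has_integral B) {c..v}" "u \<le> c" "c \<le> v"
  shows "((\<lambda>t. if t \<le> c then q t else r t) has_integral A + B) {u..v}"
proof (rule has_integral_combine[OF assms(3,4)])
  show "((\<lambda>t. if t \<le> c then q t else r t) has_integral A) {u..c}"
    using assms(1) by (rule has_integral_eq[rotated]) auto
  show "((\<lambda>t. if t \<le> c then q t else r t) has_integral B) {c..v}"
    using assms(2) by (rule has_integral_spike_finite[of "{c}", rotated 2]) auto
qed

abbreviation unit_sq :: "(real \<times> real) set" where
  "unit_sq \<equiv> {0..1} \<times> {0..1}"

lemma has_real_derivative_along_line:
  fixes G G1 G2 :: "real \<times> real \<Rightarrow> real"
  assumes grad: "\<And>p. p \<in> D \<Longrightarrow> (G has_derivative (\<lambda>(h, k). G1 p * h + G2 p * k)) (at p within D)"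
    and line: "\<And>s. s \<in> T \<Longrightarrow> (a + m1 * s, b + m2 * s) \<in> D" and s: "s \<in> T"
  shows "((\<lambda>s. G (a + m1 * s, b + m2 * s)) has_real_derivative
           m1 * G1 (a + m1 * s, b + m2 * s) + m2 * G2 (a + m1 * s, b + m2 * s)) (at s within T)"
proof -
  let ?P = "\<lambda>s. (a + m1 * s, b + m2 * s)"
  have "(?P has_derivative (\<lambda>t. (m1 * t, m2 * t))) (at s within T)"
    by (auto intro!: derivative_eq_intros)
  moreover have "(G has_derivative (\<lambda>(h, k). G1 (?P s) * h + G2 (?P s) * k)) (at (?P s) within ?P ` T)"
    using grad[OF line[OF s]] by (rule has_derivative_subset) (use line in auto)
  ultimately have "((G \<circ> ?P) has_derivative
      ((\<lambda>(h, k). G1 (?P s) * h + G2 (?P s) * k) \<circ> (\<lambda>t. (m1 * t, m2 * t)))) (at s within T)"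
    by (rule diff_chain_within)
  then show ?thesis
    unfolding has_field_derivative_def o_def
    by (rule has_derivative_eq_rhs) (auto simp: algebra_simps)
qed

lemma has_integral_along_line:
  fixes G G1 G2 :: "real \<times> real \<Rightarrow> real"
  assumes grad: "\<And>p. p \<in> D \<Longrightarrow> (G has_derivative (\<lambda>(h, k). G1 p * h + G2 p * k)) (at p within D)"
    and line: "\<And>s. s \<in> {u..v} \<Longrightarrow> (a + m1 * s, b + m2 * s) \<in> D" and "u \<le> v"
  shows "((\<lambda>s. m1 * G1 (a + m1 * s, b + m2 * s) + m2 * G2 (a + m1 * s, b + m2 * s)) has_integral
           G (a + m1 * v, b + m2 * v) - G (a + m1 * u, b + m2 * u)) {u..v}"
proof (rule fundamental_theorem_of_calculus[OF \<open>u \<le> v\<close>])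
  fix s assume s: "s \<in> {u..v}"
  then show "((\<lambda>s. G (a + m1 * s, b + m2 * s)) has_vector_derivative
      m1 * G1 (a + m1 * s, b + m2 * s) + m2 * G2 (a + m1 * s, b + m2 * s)) (at s within {u..v})"
    using has_real_derivative_along_line[OF grad line s]
    by (simp add: has_real_derivative_iff_has_vector_derivative)
qed

lemma antitone_of_nonpos_gradient:
  fixes G G1 G2 :: "real \<times> real \<Rightarrow> real"
  assumes "convex D"
    and grad: "\<And>p. p \<in> D \<Longrightarrow> (G has_derivative (\<lambda>(h, k). G1 p * h + G2 p * k)) (at p within D)"
    and nonpos: "\<And>p. p \<in> D \<Longrightarrow> G1 p \<le> 0 \<and> G2 p \<le> 0"
    and "(a, b) \<in> D" "(c, d) \<in> D" "a \<le> c" "b \<le> d"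
  shows "G (c, d) \<le> G (a, b)"
proof -
  have seg: "(a + (c - a) * s, b + (d - b) * s) \<in> D" if "s \<in> {0..1}" for s
  proof -
    have "(a + (c - a) * s, b + (d - b) * s) = (1 - s) *\<^sub>R (a, b) + s *\<^sub>R (c, d)"
      by (simp add: algebra_simps)
    also have "\<dots> \<in> D"
      by (rule convexD) (use \<open>convex D\<close> assms(4,5) that in auto)
    finally show ?thesis .
  qed
  have "((\<lambda>s. (c - a) * G1 (a + (c - a) * s, b + (d - b) * s) + (d - b) * G2 (a + (c - a) * s, b + (d - b) * s))
      has_integral G (c, d) - G (a, b)) {0..1}"
    using has_integral_along_line[OF grad seg, of 0 1] by simp
  moreover have "(c - a) * G1 (a + (c - a) * s, b + (d - b) * s) + (d - b) * G2 (a + (c - a) * s, b + (d - b) * s) \<le> 0"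
    if "s \<in> {0..1}" for s
    using nonpos[OF seg[OF that]] assms(6,7) by (auto intro!: add_nonpos_nonpos mult_nonneg_nonpos)
  ultimately have "G (c, d) - G (a, b) \<le> 0"
    using has_integral_le[OF _ has_integral_0] by blast
  then show ?thesis by simp
qed

locale smooth_dr_submodular =
  fixes f f1 f2 f11 f12 f21 f22 :: "real \<times> real \<Rightarrow> real"
  assumes grad_f: "\<And>p. p \<in> unit_sq \<Longrightarrow> (f has_derivative (\<lambda>(h, k). f1 p * h + f2 p * k)) (at p within unit_sq)"
    and grad_f1: "\<And>p. p \<in> unit_sq \<Longrightarrow> (f1 has_derivative (\<lambda>(h, k). f11 p * h + f12 p * k)) (at p within unit_sq)"
    and grad_f2: "\<And>p. p \<in> unit_sq \<Longrightarrow> (f2 has_derivative (\<lambda>(h, k). f21 p * h + f22 p * k)) (at p within unit_sq)"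
    and hessian_nonpos: "\<And>p. p \<in> unit_sq \<Longrightarrow> f11 p \<le> 0 \<and> f12 p \<le> 0 \<and> f21 p \<le> 0 \<and> f22 p \<le> 0"
begin

lemma f1_antitone:
  "(a, b) \<in> unit_sq \<Longrightarrow> (c, d) \<in> unit_sq \<Longrightarrow> a \<le> c \<Longrightarrow> b \<le> d \<Longrightarrow> f1 (c, d) \<le> f1 (a, b)"
  using antitone_of_nonpos_gradient[OF _ grad_f1] hessian_nonpos
  by (simp add: convex_Times)

lemma f2_antitone:
  "(a, b) \<in> unit_sq \<Longrightarrow> (c, d) \<in> unit_sq \<Longrightarrow> a \<le> c \<Longrightarrow> b \<le> d \<Longrightarrow> f2 (c, d) \<le> f2 (a, b)"
  using antitone_of_nonpos_gradient[OF _ grad_f2] hessian_nonpos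
  by (simp add: convex_Times)

lemma continuous_on_f: "continuous_on unit_sq f"
  and continuous_on_f1: "continuous_on unit_sq f1"
  and continuous_on_f2: "continuous_on unit_sq f2"
  using grad_f grad_f1 grad_f2 has_derivative_continuous
  unfolding continuous_on_eq_continuous_within by blast+

lemma has_integral_f2_vertical:
  "a \<in> {0..1} \<Longrightarrow> 0 \<le> u \<Longrightarrow> u \<le> v \<Longrightarrow> v \<le> 1 \<Longrightarrow>
    ((\<lambda>s. f2 (a, s)) has_integral f (a, v) - f (a, u)) {u..v}"
  using has_integral_along_line[OF grad_f, of u v a 0 0 1] by auto

lemma has_integral_f1_horizontal:
  "b \<in> {0..1} \<Longrightarrow> 0 \<le> u \<Longrightarrow> u \<le> v \<Longrightarrow> v \<le> 1 \<Longrightarrow>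
    ((\<lambda>s. f1 (s, b)) has_integral f (v, b) - f (u, b)) {u..v}"
  using has_integral_along_line[OF grad_f, of u v 0 1 b 0] by auto

lemma has_integral_diagonal:
  "0 \<le> u \<Longrightarrow> u \<le> v \<Longrightarrow> v \<le> 1 \<Longrightarrow>
    ((\<lambda>s. f1 (s, s) + f2 (s, s)) has_integral f (v, v) - f (u, u)) {u..v}"
  using has_integral_along_line[OF grad_f, of u v 0 1 0 1] by auto

end

section \<open>Concave sums against a majorizing profile\<close>

lemma integral_comp_le_tangent:
  fixes \<phi> \<gamma> :: "real \<Rightarrow> real"
  assumes tangent: "\<And>y. y \<in> {0..1} \<Longrightarrow> \<phi> y \<le> \<phi> x + c * (y - x)"
    and range: "\<And>t. t \<in> {u..v} \<Longrightarrow> \<gamma> t \<in> {0..1}"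
    and int_\<phi>\<gamma>: "(\<lambda>t. \<phi> (\<gamma> t)) integrable_on {u..v}" and int_\<gamma>: "\<gamma> integrable_on {u..v}"
    and "u \<le> v"
  shows "integral {u..v} (\<lambda>t. \<phi> (\<gamma> t)) \<le> (v - u) * \<phi> x + c * (integral {u..v} \<gamma> - (v - u) * x)"
proof -
  have "\<phi> (\<gamma> t) \<le> (\<phi> x - c * x) + c * \<gamma> t" if "t \<in> {u..v}" for t
    using tangent[OF range[OF that]] by (simp add: algebra_simps)
  then have "integral {u..v} (\<lambda>t. \<phi> (\<gamma> t)) \<le> integral {u..v} (\<lambda>t. (\<phi> x - c * x) + c * \<gamma> t)"
    by (intro integral_le int_\<phi>\<gamma> integrable_add integrable_const_ivl
        integrable_cmul[OF int_\<gamma>, simplified])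
  also have "\<dots> = (v - u) * (\<phi> x - c * x) + c * integral {u..v} \<gamma>"
    using \<open>u \<le> v\<close> by (subst integral_add) (auto intro: integrable_cmul[OF int_\<gamma>, simplified])
  finally show ?thesis by (simp add: algebra_simps)
qed

definition majorized :: "'i set \<Rightarrow> ('i \<Rightarrow> real) \<Rightarrow> ('i \<Rightarrow> real) \<Rightarrow> (real \<Rightarrow> real) \<Rightarrow> bool" where
  "majorized I lam a \<gamma> \<longleftrightarrow>
     (\<forall>S\<subseteq>I. (\<Sum>i\<in>S. lam i * a i) \<le> integral {0..sum lam S} \<gamma>) \<and>
     (\<Sum>i\<in>I. lam i * a i) = integral {0..sum lam I} \<gamma>"

text \<open>The slack term, weighted by the supergradient at a lower bound \<open>m\<close> of the points, is what
  makes the inequality survive the removal of the smallest point in the induction.\<close>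
lemma concave_sum_ge_integral_minus_slack:
  fixes lam a :: "'i \<Rightarrow> real" and \<phi> c \<gamma> :: "real \<Rightarrow> real"
  assumes "finite I" and lam_pos: "\<forall>i\<in>I. lam i > 0" and a_range: "\<forall>i\<in>I. a i \<in> {0..1}"
    and tangent: "\<And>x y. x \<in> {0..1} \<Longrightarrow> y \<in> {0..1} \<Longrightarrow> \<phi> y \<le> \<phi> x + c x * (y - x)"
    and c_antitone: "\<And>x y. x \<in> {0..1} \<Longrightarrow> y \<in> {0..1} \<Longrightarrow> x \<le> y \<Longrightarrow> c y \<le> c x"
    and \<gamma>_range: "\<forall>t\<in>{0..sum lam I}. \<gamma> t \<in> {0..1}"
    and int_\<phi>\<gamma>: "(\<lambda>t. \<phi> (\<gamma> t)) integrable_on {0..sum lam I}" and int_\<gamma>: "\<gamma> integrable_on {0..sum lam I}"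
    and sub: "\<forall>S\<subseteq>I. (\<Sum>i\<in>S. lam i * a i) \<le> integral {0..sum lam S} \<gamma>"
    and "S \<subseteq> I" and "m \<in> {0..1}" and "\<forall>i\<in>S. m \<le> a i"
  shows "integral {0..sum lam S} (\<lambda>t. \<phi> (\<gamma> t))
           - c m * (integral {0..sum lam S} \<gamma> - (\<Sum>i\<in>S. lam i * a i))
         \<le> (\<Sum>i\<in>S. lam i * \<phi> (a i))"
  using finite_subset[OF \<open>S \<subseteq> I\<close> \<open>finite I\<close>] \<open>S \<subseteq> I\<close> \<open>m \<in> {0..1}\<close> \<open>\<forall>i\<in>S. m \<le> a i\<close>
proof (induction S arbitrary: m rule: finite_remove_induct)
  case empty
  then show ?case by simp
next
  case (remove A)
  \<comment> \<open>peel off the point of \<open>A\<close> with the smallest value; it occupies the last stretch of the profile\<close>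
  have "Min (a ` A) \<in> a ` A" using remove.hyps(1,2) by (intro Min_in) auto
  then obtain j where j: "j \<in> A" "a j = Min (a ` A)" by (metis imageE)
  have j_min: "\<forall>i\<in>A. a j \<le> a i" using j remove.hyps(1) by auto
  define L' where "L' = sum lam (A - {j})"
  define L where "L = sum lam A"
  have lam_nonneg: "\<forall>i\<in>I. 0 \<le> lam i" using lam_pos by auto
  have L: "L = L' + lam j" "0 \<le> L'" "0 < lam j"
    using remove.hyps(1) remove.prems(1) j(1) lam_pos lam_nonneg unfolding L_def L'_def
    by (auto simp: sum.remove intro!: sum_nonneg)
  have L_le: "L \<le> sum lam I"
    using remove.prems(1) lam_nonneg unfolding L_def by (intro sum_mono2[OF \<open>finite I\<close>]) auto
  have aj: "a j \<in> {0..1}" using a_range remove.prems(1) j(1) by auto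
  have int_L: "(\<lambda>t. \<phi> (\<gamma> t)) integrable_on {0..L}" "\<gamma> integrable_on {0..L}"
    using integrable_subinterval_real[OF int_\<phi>\<gamma>] integrable_subinterval_real[OF int_\<gamma>] L L_le by auto
  have split: "integral {0..L} (\<lambda>t. \<phi> (\<gamma> t)) = integral {0..L'} (\<lambda>t. \<phi> (\<gamma> t)) + integral {L'..L} (\<lambda>t. \<phi> (\<gamma> t))"
    "integral {0..L} \<gamma> = integral {0..L'} \<gamma> + integral {L'..L} \<gamma>"
    using Henstock_Kurzweil_Integration.integral_combine[OF _ _ int_L(1)]
      Henstock_Kurzweil_Integration.integral_combine[OF _ _ int_L(2)] L by auto
  have last: "integral {L'..L} (\<lambda>t. \<phi> (\<gamma> t)) \<le> lam j * \<phi> (a j) + c (a j) * (integral {L'..L} \<gamma> - lam j * a j)"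
    using integral_comp_le_tangent[OF tangent[OF aj], of L' L \<gamma>] \<gamma>_range L L_le
      integrable_subinterval_real[OF int_L(1), of L' L] integrable_subinterval_real[OF int_L(2), of L' L]
    by force
  have IH: "integral {0..L'} (\<lambda>t. \<phi> (\<gamma> t)) - c (a j) * (integral {0..L'} \<gamma> - (\<Sum>i\<in>A - {j}. lam i * a i))
      \<le> (\<Sum>i\<in>A - {j}. lam i * \<phi> (a i))"
    using remove.IH[OF j(1), of "a j"] remove.prems(1) aj j_min unfolding L'_def by auto
  have "(\<Sum>i\<in>A. lam i * \<phi> (a i)) = (\<Sum>i\<in>A - {j}. lam i * \<phi> (a i)) + lam j * \<phi> (a j)"
    "(\<Sum>i\<in>A. lam i * a i) = (\<Sum>i\<in>A - {j}. lam i * a i) + lam j * a j"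
    using remove.hyps(1) j(1) by (simp_all add: sum.remove)
  then have main: "integral {0..L} (\<lambda>t. \<phi> (\<gamma> t)) - c (a j) * (integral {0..L} \<gamma> - (\<Sum>i\<in>A. lam i * a i))
      \<le> (\<Sum>i\<in>A. lam i * \<phi> (a i))"
    using IH last split by (simp add: algebra_simps)
  have "c (a j) * (integral {0..L} \<gamma> - (\<Sum>i\<in>A. lam i * a i))
      \<le> c m * (integral {0..L} \<gamma> - (\<Sum>i\<in>A. lam i * a i))"
    using sub remove.prems j(1) aj c_antitone unfolding L_def by (intro mult_right_mono) auto
  then show ?case using main unfolding L_def by linarith
qed

lemma majorized_sum_concave_ge_integral:
  fixes lam a :: "'i \<Rightarrow> real" and \<phi> c \<gamma> :: "real \<Rightarrow> real"
  assumes "finite I" "\<forall>i\<in>I. lam i > 0" "\<forall>i\<in>I. a i \<in> {0..1}"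
    and "\<And>x y. x \<in> {0..1} \<Longrightarrow> y \<in> {0..1} \<Longrightarrow> \<phi> y \<le> \<phi> x + c x * (y - x)"
    and "\<And>x y. x \<in> {0..1} \<Longrightarrow> y \<in> {0..1} \<Longrightarrow> x \<le> y \<Longrightarrow> c y \<le> c x"
    and "\<forall>t\<in>{0..sum lam I}. \<gamma> t \<in> {0..1}"
    and "(\<lambda>t. \<phi> (\<gamma> t)) integrable_on {0..sum lam I}" "\<gamma> integrable_on {0..sum lam I}"
    and "majorized I lam a \<gamma>"
  shows "integral {0..sum lam I} (\<lambda>t. \<phi> (\<gamma> t)) \<le> (\<Sum>i\<in>I. lam i * \<phi> (a i))"
  using concave_sum_ge_integral_minus_slack[OF assms(1-8), of I 0] assms(3,9)
  by (auto simp: majorized_def)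

section \<open>Separable minorants along monotone curves\<close>

text \<open>\<open>k\<close> is a generalised inverse of \<open>h\<close>: together they describe a monotone curve through the
  unit square whose horizontal pieces are flats of \<open>h\<close> and whose vertical pieces are flats of \<open>k\<close>.\<close>
definition monotone_curve :: "(real \<Rightarrow> real) \<Rightarrow> (real \<Rightarrow> real) \<Rightarrow> bool" where
  "monotone_curve h k \<longleftrightarrow>
     h ` {0..1} \<subseteq> {0..1} \<and> k ` {0..1} \<subseteq> {0..1} \<and> mono_on {0..1} h \<and> mono_on {0..1} k \<and>
     (\<forall>a\<in>{0..1}. \<forall>u\<in>{0..1}. (h a < u \<longrightarrow> a \<le> k u) \<and> (u < h a \<longrightarrow> k u \<le> a))"

context smooth_dr_submodular
begin

definition F1 :: "(real \<Rightarrow> real) \<Rightarrow> real \<Rightarrow> real" where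
  "F1 h a = integral {0..a} (\<lambda>s. f1 (s, h s))"

definition F2 :: "(real \<Rightarrow> real) \<Rightarrow> real \<Rightarrow> real" where
  "F2 k b = integral {0..b} (\<lambda>u. f2 (k u, u))"

lemma antimono_f1_along_curve: "monotone_curve h k \<Longrightarrow> antimono_on {0..1} (\<lambda>s. f1 (s, h s))"
  unfolding monotone_curve_def monotone_on_def by (auto intro!: f1_antitone)

lemma antimono_f2_along_curve: "monotone_curve h k \<Longrightarrow> antimono_on {0..1} (\<lambda>u. f2 (k u, u))"
  unfolding monotone_curve_def monotone_on_def by (auto intro!: f2_antitone)

lemma F1_tangent:
  "monotone_curve h k \<Longrightarrow> x \<in> {0..1} \<Longrightarrow> y \<in> {0..1} \<Longrightarrow> F1 h y \<le> F1 h x + f1 (x, h x) * (y - x)"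
  unfolding F1_def using integral_antimono_supergradient[OF antimono_f1_along_curve] by blast

lemma F2_tangent:
  "monotone_curve h k \<Longrightarrow> x \<in> {0..1} \<Longrightarrow> y \<in> {0..1} \<Longrightarrow> F2 k y \<le> F2 k x + f2 (k x, x) * (y - x)"
  unfolding F2_def using integral_antimono_supergradient[OF antimono_f2_along_curve] by blast

lemma continuous_on_F1: "monotone_curve h k \<Longrightarrow> continuous_on {0..1} (F1 h)"
  unfolding F1_def
  by (intro indefinite_integral_continuous_1 integrable_on_antimono_on antimono_f1_along_curve)

lemma continuous_on_F2: "monotone_curve h k \<Longrightarrow> continuous_on {0..1} (F2 k)"
  unfolding F2_def
  by (intro indefinite_integral_continuous_1 integrable_on_antimono_on antimono_f2_along_curve)

lemma F2_diff:
  assumes "monotone_curve h k" "0 \<le> u" "u \<le> v" "v \<le> 1"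
  shows "F2 k v - F2 k u = integral {u..v} (\<lambda>s. f2 (k s, s))"
proof -
  have "(\<lambda>s. f2 (k s, s)) integrable_on {0..v}"
    by (rule integrable_subinterval_real[OF integrable_on_antimono_on[OF antimono_f2_along_curve]])
      (use assms in auto)
  from Henstock_Kurzweil_Integration.integral_combine[OF _ _ this, of u] assms
  show ?thesis unfolding F2_def by simp
qed

text \<open>Away from the curve, \<open>f\<close> dominates the separable function \<open>F1 h a + F2 k b\<close>: moving
  vertically from the curve point \<open>(a, h a)\<close> to \<open>(a, b)\<close>, the integrand \<open>f2 (a, _)\<close> is compared
  with \<open>f2 (k _, _)\<close> on the correct side of the curve.\<close>
lemma F1_plus_F2_le:
  assumes curve: "monotone_curve h k"
    and tight: "\<And>a. a \<in> {0..1} \<Longrightarrow> f (a, h a) = F1 h a + F2 k (h a)"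
    and a: "a \<in> {0..1}" and b: "b \<in> {0..1}"
  shows "F1 h a + F2 k b \<le> f (a, b)"
proof -
  define y where "y = h a"
  have y: "y \<in> {0..1}" and k01: "\<And>u. u \<in> {0..1} \<Longrightarrow> k u \<in> {0..1}"
    using curve a unfolding monotone_curve_def y_def by (auto simp: image_subset_iff)
  have int_k: "(\<lambda>s. f2 (k s, s)) integrable_on {u..v}" if "0 \<le> u" "v \<le> 1" for u v
    by (rule integrable_subinterval_real[OF integrable_on_antimono_on[OF antimono_f2_along_curve[OF curve]]])
      (use that in auto)
  have "F2 k b - F2 k y \<le> f (a, b) - f (a, y)"
  proof (cases "y \<le> b")
    case True
    have "F2 k b - F2 k y = integral {y..b} (\<lambda>s. f2 (k s, s))"
      using F2_diff[OF curve] y b True by auto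
    also have "\<dots> \<le> integral {y..b} (\<lambda>s. f2 (a, s))"
    proof (rule integral_le_on_interior)
      fix s assume s: "s \<in> {y<..<b}"
      then have "s \<in> {0..1}" using y b by auto
      then have "a \<le> k s" using curve a s unfolding monotone_curve_def y_def by auto
      then show "f2 (k s, s) \<le> f2 (a, s)" using f2_antitone a k01 s y b by auto
    qed (use int_k y b has_integral_f2_vertical[OF a _ True] in auto)
    also have "\<dots> = f (a, b) - f (a, y)"
      using has_integral_f2_vertical[OF a _ True] y b by (simp add: integral_unique)
    finally show ?thesis .
  next
    case False
    have "f (a, y) - f (a, b) = integral {b..y} (\<lambda>s. f2 (a, s))"
      using has_integral_f2_vertical[of a b y] a y b False by (simp add: integral_unique)
    also have "\<dots> \<le> integral {b..y} (\<lambda>s. f2 (k s, s))"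
    proof (rule integral_le_on_interior)
      fix s assume s: "s \<in> {b<..<y}"
      then have "s \<in> {0..1}" using y b by auto
      then have "k s \<le> a" using curve a s unfolding monotone_curve_def y_def by auto
      then show "f2 (a, s) \<le> f2 (k s, s)" using f2_antitone a k01 s y b by auto
    qed (use int_k y b has_integral_f2_vertical[of a b y] a False in auto)
    also have "\<dots> = F2 k y - F2 k b"
      using F2_diff[OF curve] y b False by auto
    finally show ?thesis by simp
  qed
  then show ?thesis using tight[OF a] unfolding y_def by simp
qed

end

definition profile_on :: "real set \<Rightarrow> (real \<Rightarrow> real) \<Rightarrow> bool" where
  "profile_on T \<gamma> \<longleftrightarrow>
     (\<forall>t\<in>T. \<gamma> t \<in> {0..1}) \<and> (\<forall>\<phi> :: real \<Rightarrow> real. continuous_on {0..1} \<phi> \<longrightarrow> (\<lambda>t. \<phi> (\<gamma> t)) integrable_on T)"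

lemma profile_on_integrable: "profile_on T \<gamma> \<Longrightarrow> \<gamma> integrable_on T"
  unfolding profile_on_def by (auto dest: spec[of _ "\<lambda>x. x"])

lemma profile_on_continuous:
  assumes "continuous_on {u..v} \<gamma>" "\<forall>t\<in>{u..v}. \<gamma> t \<in> {0..1}"
  shows "profile_on {u..v} \<gamma>"
  unfolding profile_on_def
proof (intro conjI allI impI)
  fix \<phi> :: "real \<Rightarrow> real" assume "continuous_on {0..1} \<phi>"
  then have "continuous_on {u..v} (\<lambda>t. \<phi> (\<gamma> t))"
    by (rule continuous_on_compose2[OF _ assms(1)]) (use assms(2) in auto)
  then show "(\<lambda>t. \<phi> (\<gamma> t)) integrable_on {u..v}" by (rule integrable_continuous_interval)
qed (use assms(2) in auto)

lemma profile_on_spike: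
  assumes "profile_on {u..v} q" "\<And>t. t \<in> {u<..<v} \<Longrightarrow> \<gamma> t = q t" "\<forall>t\<in>{u..v}. \<gamma> t \<in> {0..1}"
  shows "profile_on {u..v} \<gamma>"
  unfolding profile_on_def
proof (intro conjI allI impI)
  fix \<phi> :: "real \<Rightarrow> real" assume "continuous_on {0..1} \<phi>"
  then have "(\<lambda>t. \<phi> (q t)) integrable_on {u..v}" using assms(1) unfolding profile_on_def by blast
  then show "(\<lambda>t. \<phi> (\<gamma> t)) integrable_on {u..v}"
    by (rule integrable_spike_finite[of "{u, v}", rotated 2]) (use assms(2) in auto)
qed (use assms(3) in auto)

lemma profile_on_combine:
  assumes "u \<le> c" "c \<le> v" "profile_on {u..c} \<gamma>" "profile_on {c..v} \<gamma>"
  shows "profile_on {u..v} \<gamma>"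
  unfolding profile_on_def
proof (intro conjI allI impI)
  fix \<phi> :: "real \<Rightarrow> real" assume "continuous_on {0..1} \<phi>"
  then show "(\<lambda>t. \<phi> (\<gamma> t)) integrable_on {u..v}"
    using assms(3,4) unfolding profile_on_def
    by (intro Henstock_Kurzweil_Integration.integrable_combine[OF assms(1,2)]) blast+
qed (use assms in \<open>auto simp: profile_on_def\<close>)

lemma profile_on_zero: "profile_on {u..v} (\<lambda>_. 0)"
  by (rule profile_on_continuous) auto

lemma profile_on_if_le:
  assumes "u \<le> c" "c \<le> v" "profile_on {u..c} q" "profile_on {c..v} r"
  shows "profile_on {u..v} (\<lambda>t. if t \<le> c then q t else r t)"
proof (rule profile_on_combine[OF assms(1,2)])
  show "profile_on {u..c} (\<lambda>t. if t \<le> c then q t else r t)"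
    using assms(3) by (rule profile_on_spike) (use assms(3) in \<open>auto simp: profile_on_def\<close>)
  show "profile_on {c..v} (\<lambda>t. if t \<le> c then q t else r t)"
    using assms(4) by (rule profile_on_spike) (use assms in \<open>auto simp: profile_on_def\<close>)
qed

context smooth_dr_submodular
begin

lemma integrable_along_profiles:
  assumes curve: "monotone_curve h k"
    and \<gamma>1: "profile_on {0..L} \<gamma>1" and \<gamma>2: "profile_on {0..L} \<gamma>2"
    and tight: "\<And>t. t \<in> {0..L} \<Longrightarrow> f (\<gamma>1 t, \<gamma>2 t) = F1 h (\<gamma>1 t) + F2 k (\<gamma>2 t)"
  shows "(\<lambda>t. f (\<gamma>1 t, \<gamma>2 t)) integrable_on {0..L}"
proof -
  have "(\<lambda>t. F1 h (\<gamma>1 t)) integrable_on {0..L}" "(\<lambda>t. F2 k (\<gamma>2 t)) integrable_on {0..L}"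
    using \<gamma>1 \<gamma>2 continuous_on_F1[OF curve] continuous_on_F2[OF curve] unfolding profile_on_def by blast+
  from integrable_add[OF this] show ?thesis
    by (rule integrable_eq) (use tight in auto)
qed

lemma sum_ge_integral_along_profiles:
  assumes curve: "monotone_curve h k"
    and tight_curve: "\<And>a. a \<in> {0..1} \<Longrightarrow> f (a, h a) = F1 h a + F2 k (h a)"
    and "finite I" and lam_pos: "\<forall>i\<in>I. lam i > 0"
    and a: "\<forall>i\<in>I. a i \<in> {0..1}" and b: "\<forall>i\<in>I. b i \<in> {0..1}"
    and \<gamma>1: "profile_on {0..sum lam I} \<gamma>1" and \<gamma>2: "profile_on {0..sum lam I} \<gamma>2"
    and "majorized I lam a \<gamma>1" "majorized I lam b \<gamma>2"
    and tight: "\<And>t. t \<in> {0..sum lam I} \<Longrightarrow> f (\<gamma>1 t, \<gamma>2 t) = F1 h (\<gamma>1 t) + F2 k (\<gamma>2 t)"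
  shows "integral {0..sum lam I} (\<lambda>t. f (\<gamma>1 t, \<gamma>2 t)) \<le> (\<Sum>i\<in>I. lam i * f (a i, b i))"
proof -
  let ?L = "sum lam I"
  have int1: "(\<lambda>t. F1 h (\<gamma>1 t)) integrable_on {0..?L}"
    using \<gamma>1 continuous_on_F1[OF curve] unfolding profile_on_def by blast
  have int2: "(\<lambda>t. F2 k (\<gamma>2 t)) integrable_on {0..?L}"
    using \<gamma>2 continuous_on_F2[OF curve] unfolding profile_on_def by blast
  have "integral {0..?L} (\<lambda>t. F1 h (\<gamma>1 t)) \<le> (\<Sum>i\<in>I. lam i * F1 h (a i))"
    using antimono_f1_along_curve[OF curve] \<gamma>1 unfolding monotone_on_def profile_on_def
    by (intro majorized_sum_concave_ge_integral[OF \<open>finite I\<close> lam_pos a F1_tangent[OF curve]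
          _ _ int1 profile_on_integrable[OF \<gamma>1] \<open>majorized I lam a \<gamma>1\<close>]) auto
  moreover have "integral {0..?L} (\<lambda>t. F2 k (\<gamma>2 t)) \<le> (\<Sum>i\<in>I. lam i * F2 k (b i))"
    using antimono_f2_along_curve[OF curve] \<gamma>2 unfolding monotone_on_def profile_on_def
    by (intro majorized_sum_concave_ge_integral[OF \<open>finite I\<close> lam_pos b F2_tangent[OF curve]
          _ _ int2 profile_on_integrable[OF \<gamma>2] \<open>majorized I lam b \<gamma>2\<close>]) auto
  moreover have "(\<Sum>i\<in>I. lam i * F1 h (a i)) + (\<Sum>i\<in>I. lam i * F2 k (b i)) \<le> (\<Sum>i\<in>I. lam i * f (a i, b i))"
    unfolding sum.distrib[symmetric] distrib_left[symmetric]
    using F1_plus_F2_le[OF curve tight_curve] a b lam_pos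
    by (intro sum_mono mult_left_mono) auto
  moreover have "integral {0..?L} (\<lambda>t. f (\<gamma>1 t, \<gamma>2 t))
      = integral {0..?L} (\<lambda>t. F1 h (\<gamma>1 t)) + integral {0..?L} (\<lambda>t. F2 k (\<gamma>2 t))"
    unfolding integral_add[OF int1 int2, symmetric] using tight by (intro integral_cong) auto
  ultimately show ?thesis by linarith
qed

end

section \<open>The curve of Poisson probabilities\<close>

text \<open>Writing \<open>x = P\<^sub>0(\<lambda>) = e\<^sup>-\<^sup>\<lambda>\<close> gives \<open>P\<^sub>1(\<lambda>) = p1_of_p0 x\<close>: the curve
  \<open>\<lambda> \<mapsto> (P\<^sub>0(\<lambda>), P\<^sub>1(\<lambda>))\<close> is the graph of \<open>p1_of_p0\<close>.\<close>
definition p1_of_p0 :: "real \<Rightarrow> real" where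
  "p1_of_p0 x = x * (1 - ln x)"

lemma p1_of_p0_exp: "p1_of_p0 (exp (- t)) = exp (- t) * (1 + t)"
  by (simp add: p1_of_p0_def)

lemma p1_of_p0_one [simp]: "p1_of_p0 1 = 1"
  by (simp add: p1_of_p0_def)

lemma has_real_derivative_p1_of_p0: "0 < x \<Longrightarrow> (p1_of_p0 has_real_derivative - ln x) (at x)"
  unfolding p1_of_p0_def by (auto intro!: derivative_eq_intros simp: field_simps)

lemma continuous_on_p1_of_p0: "0 < a \<Longrightarrow> continuous_on {a..b} p1_of_p0"
  unfolding p1_of_p0_def by (intro continuous_intros) auto

lemma p1_of_p0_strict_mono:
  assumes "0 < x" "x < y" "y \<le> 1"
  shows "p1_of_p0 x < p1_of_p0 y"
proof -
  obtain z where z: "x < z" "z < y" "p1_of_p0 y - p1_of_p0 x = (y - x) * - ln z"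
    using MVT2[OF assms(2), of p1_of_p0 "\<lambda>z. - ln z"] has_real_derivative_p1_of_p0 assms(1) by force
  have "0 < (y - x) * - ln z" using z assms by (intro mult_pos_pos) auto
  then show ?thesis using z by linarith
qed

lemma p1_of_p0_less_iff: "x \<in> {0<..1} \<Longrightarrow> y \<in> {0<..1} \<Longrightarrow> p1_of_p0 x < p1_of_p0 y \<longleftrightarrow> x < y"
  using p1_of_p0_strict_mono[of x y] p1_of_p0_strict_mono[of y x]
  by (cases x y rule: linorder_cases) auto

lemma p1_of_p0_le_iff: "x \<in> {0<..1} \<Longrightarrow> y \<in> {0<..1} \<Longrightarrow> p1_of_p0 x \<le> p1_of_p0 y \<longleftrightarrow> x \<le> y"
  using p1_of_p0_less_iff[of y x] by auto

lemma p1_of_p0_bounds: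
  assumes "0 < x" "x \<le> 1"
  shows "x \<le> p1_of_p0 x" "p1_of_p0 x \<le> 1"
proof -
  show "x \<le> p1_of_p0 x" using assms ln_le_zero_iff[of x] unfolding p1_of_p0_def
    by (simp add: algebra_simps mult_nonneg_nonpos)
  show "p1_of_p0 x \<le> 1" using p1_of_p0_le_iff[of x 1] assms by simp
qed

lemma exp_neg_one_plus_bounds:
  fixes t :: real
  assumes "0 \<le> t"
  shows "0 \<le> exp (- t) * (1 + t)" "exp (- t) * (1 + t) \<le> 1"
  using assms p1_of_p0_bounds[of "exp (- t)"] by (auto simp: p1_of_p0_exp)

definition p0_of_p1 :: "real \<Rightarrow> real" where
  "p0_of_p1 u = (THE x. x \<in> {0<..1} \<and> p1_of_p0 x = u)"

lemma p0_of_p1_p1_of_p0: "x \<in> {0<..1} \<Longrightarrow> p0_of_p1 (p1_of_p0 x) = x"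
  unfolding p0_of_p1_def by (rule the_equality) (auto intro: order_antisym simp: p1_of_p0_le_iff[symmetric])

lemma p0_of_p1:
  assumes "0 < x0" "x0 \<le> 1" "u \<in> {p1_of_p0 x0..1}"
  shows "p0_of_p1 u \<in> {x0..1}" "p1_of_p0 (p0_of_p1 u) = u"
proof -
  obtain x where "x0 \<le> x" "x \<le> 1" "p1_of_p0 x = u"
    using IVT'[of p1_of_p0 x0 u 1] assms continuous_on_p1_of_p0[OF assms(1), of 1]
    by (auto simp: p1_of_p0_def)
  then show "p0_of_p1 u \<in> {x0..1}" "p1_of_p0 (p0_of_p1 u) = u"
    using p0_of_p1_p1_of_p0[of x] assms by auto
qed

lemma p0_of_p1_le_iff:
  assumes "0 < x0" "x0 \<le> 1" "u \<in> {p1_of_p0 x0..1}" "x \<in> {x0..1}"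
  shows "x \<le> p0_of_p1 u \<longleftrightarrow> p1_of_p0 x \<le> u" and "x < p0_of_p1 u \<longleftrightarrow> p1_of_p0 x < u"
  using p0_of_p1[OF assms(1-3)] p1_of_p0_le_iff[of x "p0_of_p1 u"] p1_of_p0_less_iff[of x "p0_of_p1 u"] assms
  by auto

lemma p0_of_p1_mono:
  assumes "0 < x0" "x0 \<le> 1" "p1_of_p0 x0 \<le> u" "u \<le> v" "v \<le> 1"
  shows "p0_of_p1 u \<le> p0_of_p1 v"
  using p0_of_p1[OF assms(1,2), of u] p0_of_p1[OF assms(1,2), of v] p0_of_p1_le_iff[OF assms(1,2), of v] assms
  by auto

lemma continuous_on_p0_of_p1:
  assumes "0 < x0" "x0 \<le> 1"
  shows "continuous_on {p1_of_p0 x0..1} p0_of_p1"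
proof -
  have "p1_of_p0 ` {x0..1} = {p1_of_p0 x0..1}"
  proof
    show "p1_of_p0 ` {x0..1} \<subseteq> {p1_of_p0 x0..1}"
      using assms p1_of_p0_le_iff p1_of_p0_bounds by auto
    show "{p1_of_p0 x0..1} \<subseteq> p1_of_p0 ` {x0..1}"
      using p0_of_p1[OF assms] by (metis image_eqI subsetI)
  qed
  moreover have "continuous_on (p1_of_p0 ` {x0..1}) p0_of_p1"
    using assms by (intro continuous_on_inv continuous_on_p1_of_p0) (auto intro: p0_of_p1_p1_of_p0)
  ultimately show ?thesis by simp
qed

context smooth_dr_submodular
begin

lemma f_differentiable_interior:
  assumes "p \<in> {0<..<1} \<times> {0<..<1}"
  shows "(f has_derivative (\<lambda>(h, k). f1 p * h + f2 p * k)) (at p)" "isCont f1 p" "isCont f2 p"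
proof -
  have p: "p \<in> interior unit_sq" using assms by (simp add: interior_Times)
  show "(f has_derivative (\<lambda>(h, k). f1 p * h + f2 p * k)) (at p)"
    using grad_f[OF interior_subset[THEN subsetD, OF p]] unfolding at_within_interior[OF p] .
  show "isCont f1 p" "isCont f2 p"
    using continuous_on_interior[OF continuous_on_f1 p] continuous_on_interior[OF continuous_on_f2 p] .
qed

lemma F1_has_real_derivative:
  "monotone_curve h k \<Longrightarrow> y \<in> {0<..<1} \<Longrightarrow> isCont (\<lambda>s. f1 (s, h s)) y \<Longrightarrow>
    (F1 h has_real_derivative f1 (y, h y)) (at y)"
  unfolding F1_def
  by (rule integral_has_real_derivative_at[OF integrable_on_antimono_on[OF antimono_f1_along_curve]])

lemma F2_has_real_derivative:
  "monotone_curve h k \<Longrightarrow> u \<in> {0<..<1} \<Longrightarrow> isCont (\<lambda>s. f2 (k s, s)) u \<Longrightarrow>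
    (F2 k has_real_derivative f2 (k u, u)) (at u)"
  unfolding F2_def
  by (rule integral_has_real_derivative_at[OF integrable_on_antimono_on[OF antimono_f2_along_curve]])

lemma has_real_derivative_f_along_p1_of_p0:
  assumes "0 < y" "y < 1"
  shows "((\<lambda>y. f (y, p1_of_p0 y)) has_real_derivative
           f1 (y, p1_of_p0 y) - ln y * f2 (y, p1_of_p0 y)) (at y)"
proof -
  let ?p = "(y, p1_of_p0 y)"
  have "?p \<in> {0<..<1} \<times> {0<..<1}"
    using assms p1_of_p0_bounds[of y] p1_of_p0_strict_mono[of y 1] by auto
  note df = f_differentiable_interior(1)[OF this]
  have "((\<lambda>y. (y, p1_of_p0 y)) has_derivative (\<lambda>t. (t, - ln y * t))) (at y)"
    using has_real_derivative_p1_of_p0[OF assms(1)] unfolding has_field_derivative_def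
    by (intro has_derivative_Pair has_derivative_ident)
  from diff_chain_at[OF this df] show ?thesis
    unfolding o_def has_field_derivative_def
    by (rule has_derivative_eq_rhs) (auto simp: algebra_simps fun_eq_iff)
qed

text \<open>Along the strictly increasing part of a monotone curve that follows \<open>u = p1_of_p0 x\<close>, the
  defect \<open>f - F1 - F2\<close> has derivative \<open>(f1 - ln y f2) - f1 - f2 (-ln y) = 0\<close>, because there
  \<open>h\<close> and \<open>k\<close> are mutually inverse.\<close>
lemma tight_along_p1_of_p0:
  assumes curve: "monotone_curve h k" and x0: "0 < x0" "x0 \<le> 1"
    and h: "\<And>x. x \<in> {x0..1} \<Longrightarrow> h x = p1_of_p0 x"
    and k: "\<And>u. u \<in> {p1_of_p0 x0<..1} \<Longrightarrow> k u = p0_of_p1 u"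
    and x: "x \<in> {x0..1}"
  shows "f (x, p1_of_p0 x) - F1 h x - F2 k (p1_of_p0 x) = f (x0, p1_of_p0 x0) - F1 h x0 - F2 k (p1_of_p0 x0)"
proof (cases "x = x0")
  case False
  then have "x0 < x" using x by auto
  have H01: "p1_of_p0 y \<in> {0..1}" if "y \<in> {x0..1}" for y
    using that x0 p1_of_p0_bounds[of y] by auto
  have "continuous_on {x0..x} (\<lambda>y. f (y, p1_of_p0 y) - F1 h y - F2 k (p1_of_p0 y))"
  proof (intro continuous_on_diff)
    have "continuous_on {x0..x} (\<lambda>y. (y, p1_of_p0 y))"
      using continuous_on_p1_of_p0[OF x0(1)] by (intro continuous_intros)
    then show "continuous_on {x0..x} (\<lambda>y. f (y, p1_of_p0 y))"
      by (rule continuous_on_compose2[OF continuous_on_f]) (use H01 x x0 in auto)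
    show "continuous_on {x0..x} (F1 h)"
      by (rule continuous_on_subset[OF continuous_on_F1[OF curve]]) (use x x0 in auto)
    show "continuous_on {x0..x} (\<lambda>y. F2 k (p1_of_p0 y))"
      by (rule continuous_on_compose2[OF continuous_on_F2[OF curve] continuous_on_p1_of_p0[OF x0(1)]])
        (use H01 x in auto)
  qed
  moreover have "((\<lambda>y. f (y, p1_of_p0 y) - F1 h y - F2 k (p1_of_p0 y)) has_real_derivative 0) (at y)"
    if y: "x0 < y" "y < x" for y
  proof -
    let ?u = "p1_of_p0 y"
    have y01: "y \<in> {0<..<1}" using x x0 y by auto
    have u: "?u \<in> {p1_of_p0 x0<..<1}"
      using p1_of_p0_strict_mono[of x0 y] p1_of_p0_strict_mono[of y 1] x0 y01 y by auto
    have p: "(y, ?u) \<in> {0<..<1} \<times> {0<..<1}"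
      using u y01 x0 p1_of_p0_bounds[of x0] by auto
    have "eventually (\<lambda>s. f1 (s, h s) = f1 (s, p1_of_p0 s)) (nhds y)"
      using eventually_nhds_in_open[of "{x0<..<1}" y] y01 y h by (auto elim!: eventually_mono)
    moreover have "isCont (\<lambda>s. (s, p1_of_p0 s)) y"
      using DERIV_isCont[OF has_real_derivative_p1_of_p0] y01 by (intro continuous_intros) auto
    then have "isCont (\<lambda>s. f1 (s, p1_of_p0 s)) y"
      using f_differentiable_interior(2)[OF p] by (rule isCont_o2)
    ultimately have dF1: "(F1 h has_real_derivative f1 (y, ?u)) (at y)"
      using F1_has_real_derivative[OF curve y01] h[of y] y y01 by (auto simp: isCont_cong)
    have ku: "p0_of_p1 ?u = y" using p0_of_p1_p1_of_p0 y01 by auto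
    have "eventually (\<lambda>s. f2 (k s, s) = f2 (p0_of_p1 s, s)) (nhds ?u)"
      using eventually_nhds_in_open[of "{p1_of_p0 x0<..<1}" ?u] u k by (auto elim!: eventually_mono)
    moreover have "isCont (\<lambda>s. (p0_of_p1 s, s)) ?u"
      using continuous_on_interior[OF continuous_on_p0_of_p1[OF x0], of ?u] u
      by (intro continuous_intros) auto
    then have "isCont (\<lambda>s. f2 (p0_of_p1 s, s)) ?u"
      using isCont_o2[of ?u "\<lambda>s. (p0_of_p1 s, s)" f2] f_differentiable_interior(3)[OF p] ku by simp
    ultimately have "(F2 k has_real_derivative f2 (y, ?u)) (at ?u)"
      using F2_has_real_derivative[OF curve, of ?u] u k[of ?u] ku x0 p1_of_p0_bounds[of x0]
      by (auto simp: isCont_cong)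
    from DERIV_chain2[OF this has_real_derivative_p1_of_p0]
    have dF2: "((\<lambda>y. F2 k (p1_of_p0 y)) has_real_derivative f2 (y, ?u) * - ln y) (at y)"
      using y01 by simp
    show ?thesis
      using DERIV_diff[OF DERIV_diff[OF has_real_derivative_f_along_p1_of_p0 dF1] dF2] y01
      by (simp add: algebra_simps)
  qed
  ultimately show ?thesis using DERIV_isconst_end[OF \<open>x0 < x\<close>] by blast
qed simp

end

text \<open>The curve that climbs the \<open>b\<close>-axis up to height \<open>p1_of_p0 x0\<close>, runs horizontally to
  \<open>(x0, p1_of_p0 x0)\<close> and then follows \<open>b = p1_of_p0 a\<close>.\<close>
definition axis_curve_h :: "real \<Rightarrow> real \<Rightarrow> real" where
  "axis_curve_h x0 x = p1_of_p0 (max x x0)"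

definition axis_curve_k :: "real \<Rightarrow> real \<Rightarrow> real" where
  "axis_curve_k x0 u = (if u \<le> p1_of_p0 x0 then 0 else p0_of_p1 u)"

text \<open>The curve that follows the diagonal up to \<open>(x0, x0)\<close>, rises vertically to
  \<open>(x0, p1_of_p0 x0)\<close> and then follows \<open>b = p1_of_p0 a\<close>.\<close>
definition diag_curve_h :: "real \<Rightarrow> real \<Rightarrow> real" where
  "diag_curve_h x0 x = (if x < x0 then x else p1_of_p0 x)"

definition diag_curve_k :: "real \<Rightarrow> real \<Rightarrow> real" where
  "diag_curve_k x0 u = (if u \<le> x0 then u else p0_of_p1 (max u (p1_of_p0 x0)))"

lemma monotone_curve_axis:
  assumes x0: "0 < x0" "x0 \<le> 1"
  shows "monotone_curve (axis_curve_h x0) (axis_curve_k x0)"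
proof -
  note K = p0_of_p1[OF x0] and K_iff = p0_of_p1_le_iff[OF x0]
  have H_x0: "x0 \<le> p1_of_p0 x0" "p1_of_p0 x0 \<le> 1" using p1_of_p0_bounds[OF x0] by auto
  have "axis_curve_h x0 x \<in> {0..1}" if "x \<in> {0..1}" for x
  proof -
    have "0 < max x x0" "max x x0 \<le> 1" using x0 that by auto
    then show ?thesis using p1_of_p0_bounds[of "max x x0"] by (auto simp: axis_curve_h_def)
  qed
  then have "axis_curve_h x0 ` {0..1} \<subseteq> {0..1}" by auto
  moreover have "axis_curve_k x0 u \<in> {0..1}" if "u \<in> {0..1}" for u
    using x0 that K[of u] by (auto simp: axis_curve_k_def)
  then have "axis_curve_k x0 ` {0..1} \<subseteq> {0..1}" by auto
  moreover have "mono_on {0..1} (axis_curve_h x0)"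
    using x0 by (auto simp: monotone_on_def axis_curve_h_def p1_of_p0_le_iff)
  moreover have "axis_curve_k x0 u \<le> axis_curve_k x0 v" if "u \<in> {0..1}" "v \<in> {0..1}" "u \<le> v" for u v
    using that x0 K[of v] p0_of_p1_mono[OF x0, of u v] by (auto simp: axis_curve_k_def)
  then have "mono_on {0..1} (axis_curve_k x0)" by (auto simp: monotone_on_def)
  moreover have "a \<le> axis_curve_k x0 u" if "a \<in> {0..1}" "u \<in> {0..1}" "axis_curve_h x0 a < u" for a u
  proof -
    have "p1_of_p0 x0 < u"
      using that x0 p1_of_p0_le_iff[of x0 "max a x0"] by (auto simp: axis_curve_h_def less_max_iff_disj)
    then show ?thesis
      using that x0 K[of u] K_iff[of u a] by (cases "a \<le> x0") (auto simp: axis_curve_h_def axis_curve_k_def)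
  qed
  moreover have "axis_curve_k x0 u \<le> a" if "a \<in> {0..1}" "u \<in> {0..1}" "u < axis_curve_h x0 a" for a u
  proof (cases "u \<le> p1_of_p0 x0")
    case False
    then have "x0 < a" using that by (auto simp: axis_curve_h_def max_def split: if_splits)
    then show ?thesis
      using False that K_iff[of u a] by (auto simp: axis_curve_h_def axis_curve_k_def)
  qed (use that in \<open>auto simp: axis_curve_k_def\<close>)
  ultimately show ?thesis unfolding monotone_curve_def by auto
qed

lemma monotone_curve_diag:
  assumes x0: "0 < x0" "x0 \<le> 1"
  shows "monotone_curve (diag_curve_h x0) (diag_curve_k x0)"
proof -
  note K = p0_of_p1[OF x0] and K_iff = p0_of_p1_le_iff[OF x0]
  have H_x0: "x0 \<le> p1_of_p0 x0" "p1_of_p0 x0 \<le> 1" using p1_of_p0_bounds[OF x0] by auto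
  have K_max: "p0_of_p1 (max u (p1_of_p0 x0)) \<in> {x0..1}" if "u \<le> 1" for u
    using K[of "max u (p1_of_p0 x0)"] that H_x0 by auto
  have "diag_curve_h x0 x \<in> {0..1}" if "x \<in> {0..1}" for x
    using x0 that p1_of_p0_bounds[of x] by (auto simp: diag_curve_h_def)
  then have "diag_curve_h x0 ` {0..1} \<subseteq> {0..1}" by auto
  moreover have "diag_curve_k x0 ` {0..1} \<subseteq> {0..1}"
    using x0 K_max by (force simp: diag_curve_k_def)
  moreover have "diag_curve_h x0 x \<le> diag_curve_h x0 y" if "x \<in> {0..1}" "y \<in> {0..1}" "x \<le> y" for x y
    using that x0 p1_of_p0_bounds[of y] p1_of_p0_le_iff[of x y] by (auto simp: diag_curve_h_def)
  then have "mono_on {0..1} (diag_curve_h x0)" by (auto simp: monotone_on_def)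
  moreover have "diag_curve_k x0 u \<le> diag_curve_k x0 v" if "u \<in> {0..1}" "v \<in> {0..1}" "u \<le> v" for u v
    using that K_max[of v] p0_of_p1_mono[OF x0, of "max u (p1_of_p0 x0)" "max v (p1_of_p0 x0)"] H_x0
    by (auto simp: diag_curve_k_def)
  then have "mono_on {0..1} (diag_curve_k x0)" by (auto simp: monotone_on_def)
  moreover have "a \<le> diag_curve_k x0 u" if "a \<in> {0..1}" "u \<in> {0..1}" "diag_curve_h x0 a < u" for a u
  proof (cases "a < x0")
    case False
    then have "p1_of_p0 x0 < u" "x0 < u"
      using that x0 H_x0 p1_of_p0_le_iff[of x0 a] by (auto simp: diag_curve_h_def)
    then show ?thesis
      using that False K_iff[of u a] by (auto simp: diag_curve_h_def diag_curve_k_def)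
  qed (use that K_max[of u] in \<open>auto simp: diag_curve_h_def diag_curve_k_def\<close>)
  moreover have "diag_curve_k x0 u \<le> a" if "a \<in> {0..1}" "u \<in> {0..1}" "u < diag_curve_h x0 a" for a u
  proof (cases "a < x0")
    case False
    then show ?thesis
      using that x0 K[of "p1_of_p0 x0"] K_iff[of "max u (p1_of_p0 x0)" a] H_x0
      by (auto simp: diag_curve_h_def diag_curve_k_def p0_of_p1_p1_of_p0)
  qed (use that in \<open>auto simp: diag_curve_h_def diag_curve_k_def\<close>)
  ultimately show ?thesis unfolding monotone_curve_def by auto
qed

context smooth_dr_submodular
begin

lemma axis_curve_tight:
  assumes f00: "f (0, 0) = 0" and x0: "0 < x0" "x0 \<le> 1"
  shows axis_curve_tight_vertical: "\<And>u. u \<in> {0..p1_of_p0 x0} \<Longrightarrow> f (0, u) = F2 (axis_curve_k x0) u"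
    and axis_curve_tight_graph: "\<And>a. a \<in> {0..1} \<Longrightarrow>
      f (a, axis_curve_h x0 a) = F1 (axis_curve_h x0) a + F2 (axis_curve_k x0) (axis_curve_h x0 a)"
proof -
  let ?h = "axis_curve_h x0" and ?k = "axis_curve_k x0" and ?y = "p1_of_p0 x0"
  have y: "x0 \<le> ?y" "?y \<le> 1" using p1_of_p0_bounds[OF x0] by auto
  show vertical: "f (0, u) = F2 ?k u" if u: "u \<in> {0..?y}" for u
  proof -
    have "F2 ?k u = integral {0..u} (\<lambda>s. f2 (0, s))"
      unfolding F2_def by (rule integral_cong) (use u in \<open>auto simp: axis_curve_k_def\<close>)
    also have "\<dots> = f (0, u) - f (0, 0)"
      by (rule integral_unique, rule has_integral_f2_vertical) (use u y in auto)
    finally show ?thesis using f00 by simp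
  qed
  have horizontal: "f (a, ?y) = F1 ?h a + F2 ?k ?y" if a: "a \<in> {0..x0}" for a
  proof -
    have "F1 ?h a = integral {0..a} (\<lambda>s. f1 (s, ?y))"
      unfolding F1_def by (rule integral_cong) (use a in \<open>auto simp: axis_curve_h_def\<close>)
    also have "\<dots> = f (a, ?y) - f (0, ?y)"
      by (rule integral_unique, rule has_integral_f1_horizontal) (use a x0 y in auto)
    finally show ?thesis using vertical[of ?y] y x0 by simp
  qed
  show "f (a, ?h a) = F1 ?h a + F2 ?k (?h a)" if a: "a \<in> {0..1}" for a
  proof (cases "a \<le> x0")
    case True
    then show ?thesis using horizontal[of a] a by (simp add: axis_curve_h_def max_def)
  next
    case False
    have "f (a, p1_of_p0 a) - F1 ?h a - F2 ?k (p1_of_p0 a) = f (x0, ?y) - F1 ?h x0 - F2 ?k ?y"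
      by (rule tight_along_p1_of_p0[OF monotone_curve_axis[OF x0] x0])
        (use a False in \<open>auto simp: axis_curve_h_def axis_curve_k_def\<close>)
    then show ?thesis using horizontal[of x0] x0 False by (simp add: axis_curve_h_def)
  qed
qed

lemma diag_curve_tight:
  assumes f00: "f (0, 0) = 0" and x0: "0 < x0" "x0 \<le> 1"
  shows diag_curve_tight_diagonal: "\<And>a. a \<in> {0..x0} \<Longrightarrow>
      f (a, a) = F1 (diag_curve_h x0) a + F2 (diag_curve_k x0) a"
    and diag_curve_tight_graph: "\<And>a. a \<in> {0..1} \<Longrightarrow>
      f (a, diag_curve_h x0 a) = F1 (diag_curve_h x0) a + F2 (diag_curve_k x0) (diag_curve_h x0 a)"
proof -
  let ?h = "diag_curve_h x0" and ?k = "diag_curve_k x0" and ?y = "p1_of_p0 x0"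
  have y: "x0 \<le> ?y" "?y \<le> 1" using p1_of_p0_bounds[OF x0] by auto
  show diagonal: "f (a, a) = F1 ?h a + F2 ?k a" if a: "a \<in> {0..x0}" for a
  proof -
    have int: "(\<lambda>s. g (s, s)) integrable_on {0..a}" if "continuous_on unit_sq g" for g :: "real \<times> real \<Rightarrow> real"
    proof -
      have "continuous_on {0..a} (\<lambda>s. g (s, s))"
        by (rule continuous_on_compose2[OF that]) (use a x0 in \<open>auto intro!: continuous_intros\<close>)
      then show ?thesis by (rule integrable_continuous_interval)
    qed
    have "F1 ?h a = integral {0..a} (\<lambda>s. f1 (s, s))"
      unfolding F1_def by (rule integral_spike[of "{x0}"]) (use a in \<open>auto simp: diag_curve_h_def\<close>)
    moreover have "F2 ?k a = integral {0..a} (\<lambda>s. f2 (s, s))"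
      unfolding F2_def by (rule integral_cong) (use a in \<open>auto simp: diag_curve_k_def\<close>)
    moreover have "integral {0..a} (\<lambda>s. f1 (s, s) + f2 (s, s)) = f (a, a) - f (0, 0)"
      by (rule integral_unique, rule has_integral_diagonal) (use a x0 in auto)
    ultimately show ?thesis
      using integral_add[OF int[OF continuous_on_f1] int[OF continuous_on_f2]] f00 by simp
  qed
  have vertical: "f (x0, ?y) = F1 ?h x0 + F2 ?k ?y"
  proof -
    have "F2 ?k ?y - F2 ?k x0 = integral {x0..?y} (\<lambda>s. f2 (?k s, s))"
      using F2_diff[OF monotone_curve_diag[OF x0]] x0 y by auto
    also have "\<dots> = integral {x0..?y} (\<lambda>s. f2 (x0, s))"
      using x0 by (intro integral_cong) (auto simp: diag_curve_k_def max_def p0_of_p1_p1_of_p0)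
    also have "\<dots> = f (x0, ?y) - f (x0, x0)"
      by (rule integral_unique, rule has_integral_f2_vertical) (use x0 y in auto)
    finally show ?thesis using diagonal[of x0] x0 by simp
  qed
  show "f (a, ?h a) = F1 ?h a + F2 ?k (?h a)" if a: "a \<in> {0..1}" for a
  proof (cases "a < x0")
    case True
    then show ?thesis using diagonal[of a] a by (simp add: diag_curve_h_def)
  next
    case False
    have "f (a, p1_of_p0 a) - F1 ?h a - F2 ?k (p1_of_p0 a) = f (x0, ?y) - F1 ?h x0 - F2 ?k ?y"
      by (rule tight_along_p1_of_p0[OF monotone_curve_diag[OF x0] x0])
        (use a False y in \<open>auto simp: diag_curve_h_def diag_curve_k_def\<close>)
    then show ?thesis using vertical False by (simp add: diag_curve_h_def)
  qed
qed

end

section \<open>Poisson profiles\<close>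

lemma has_integral_exp_neg:
  assumes "(u::real) \<le> v"
  shows "((\<lambda>t. exp (- t)) has_integral exp (- u) - exp (- v)) {u..v}"
proof -
  have "((\<lambda>t. exp (- t)) has_integral (- exp (- v)) - (- exp (- u))) {u..v}"
    by (rule fundamental_theorem_of_calculus[OF assms])
      (auto intro!: derivative_eq_intros simp: has_real_derivative_iff_has_vector_derivative[symmetric])
  then show ?thesis by simp
qed

lemma has_integral_exp_neg_one_plus:
  assumes "(u::real) \<le> v"
  shows "((\<lambda>t. exp (- t) * (1 + t)) has_integral exp (- u) * (2 + u) - exp (- v) * (2 + v)) {u..v}"
proof -
  have "((\<lambda>t. exp (- t) * (1 + t)) has_integral (- exp (- v) * (2 + v)) - (- exp (- u) * (2 + u))) {u..v}"
    by (rule fundamental_theorem_of_calculus[OF assms])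
      (auto intro!: derivative_eq_intros
        simp: has_real_derivative_iff_has_vector_derivative[symmetric] algebra_simps)
  then show ?thesis by simp
qed

lemma exp_neg_two_plus_strict_antimono:
  fixes s t :: real
  assumes "0 \<le> s" "s < t"
  shows "exp (- t) * (2 + t) < exp (- s) * (2 + s)"
proof -
  have "\<And>z. s \<le> z \<Longrightarrow> z \<le> t \<Longrightarrow> DERIV (\<lambda>x. - exp (- x) * (2 + x)) z :> exp (- z) * (1 + z)"
    by (auto intro!: derivative_eq_intros simp: algebra_simps)
  from MVT2[OF assms(2) this] obtain z where z: "s < z" "z < t"
    "- exp (- t) * (2 + t) - - exp (- s) * (2 + s) = (t - s) * (exp (- z) * (1 + z))"
    by blast
  have "0 < (t - s) * (exp (- z) * (1 + z))" using z assms by (intro mult_pos_pos) auto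
  then show ?thesis using z by linarith
qed

text \<open>With \<open>t\<close> read as the arrival rate \<open>\<lambda>\<close>, the integrals of these profiles over \<open>[0, \<mu>]\<close>
  are the right-hand sides \<open>1 - P\<^sub>0(\<mu>)\<close> and \<open>(1 - P\<^sub>0(\<mu>)) + (1 - P\<^sub>1(\<mu>))\<close> of the polytope
  constraints, frozen once \<open>\<mu>\<close> passes the cut-off rates.\<close>
definition p0_profile :: "real \<Rightarrow> real \<Rightarrow> real" where
  "p0_profile l t = (if t \<le> l then exp (- t) else 0)"

definition p1_profile :: "real \<Rightarrow> (real \<Rightarrow> real) \<Rightarrow> real \<Rightarrow> real" where
  "p1_profile l \<gamma> t = (if t \<le> l then exp (- t) * (1 + t) else \<gamma> t)"

lemma has_integral_p0_profile:
  assumes "u \<le> l" "u \<le> \<mu>"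
  shows "(p0_profile l has_integral exp (- u) - exp (- min \<mu> l)) {u..\<mu>}"
proof (cases "\<mu> \<le> l")
  case True
  then show ?thesis using has_integral_exp_neg[OF assms(2)]
    by (auto simp: p0_profile_def intro: has_integral_eq[rotated])
next
  case False
  have "((\<lambda>t. if t \<le> l then exp (- t) else 0) has_integral exp (- u) - exp (- l) + 0) {u..\<mu>}"
    using False assms by (intro has_integral_if_le has_integral_exp_neg has_integral_0) auto
  then show ?thesis using False by (simp add: p0_profile_def[abs_def])
qed

lemma has_integral_p1_profile:
  assumes "0 \<le> \<mu>" "\<mu> \<le> l"
  shows "(p1_profile l \<gamma> has_integral 2 - exp (- \<mu>) * (2 + \<mu>)) {0..\<mu>}"
  using has_integral_exp_neg_one_plus[OF assms(1)] assms
  by (auto simp: p1_profile_def intro: has_integral_eq[rotated])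

lemma has_integral_p1_profile_beyond:
  assumes "0 \<le> l" "l \<le> \<mu>" "(\<gamma> has_integral B) {l..\<mu>}"
  shows "(p1_profile l \<gamma> has_integral 2 - exp (- l) * (2 + l) + B) {0..\<mu>}"
  using has_integral_if_le[OF has_integral_exp_neg_one_plus[OF assms(1)] assms(3) assms(1,2)]
  by (simp add: p1_profile_def[abs_def])

lemma profile_on_p0_profile:
  assumes "0 \<le> u" "u \<le> l" "l \<le> v"
  shows "profile_on {u..v} (p0_profile l)"
  unfolding p0_profile_def
proof (rule profile_on_if_le[OF assms(2,3) profile_on_continuous profile_on_zero])
  show "continuous_on {u..l} (\<lambda>t. exp (- t))" by (intro continuous_intros)
  show "\<forall>t\<in>{u..l}. exp (- t) \<in> {0..1}" using assms(1) by auto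
qed

lemma profile_on_p1_profile:
  assumes "0 \<le> l" "l \<le> v" "profile_on {l..v} \<gamma>"
  shows "profile_on {0..v} (p1_profile l \<gamma>)"
  unfolding p1_profile_def
proof (rule profile_on_if_le[OF assms(1,2) profile_on_continuous assms(3)])
  show "continuous_on {0..l} (\<lambda>t. exp (- t) * (1 + t))" by (intro continuous_intros)
  show "\<forall>t\<in>{0..l}. exp (- t) * (1 + t) \<in> {0..1}" by (simp add: exp_neg_one_plus_bounds)
qed

lemma majorizedI:
  fixes lam a :: "'i \<Rightarrow> real"
  assumes "finite I" "\<forall>i\<in>I. lam i > 0" "\<forall>i\<in>I. 0 \<le> a i"
    and bound: "\<forall>S\<subseteq>I. (\<Sum>i\<in>S. lam i * a i) \<le> B (sum lam S)"
    and lower: "\<And>\<mu>. 0 \<le> \<mu> \<Longrightarrow> \<mu> \<le> sum lam I \<Longrightarrow> min (B \<mu>) (\<Sum>i\<in>I. lam i * a i) \<le> integral {0..\<mu>} \<gamma>"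
    and total: "integral {0..sum lam I} \<gamma> = (\<Sum>i\<in>I. lam i * a i)"
  shows "majorized I lam a \<gamma>"
  unfolding majorized_def
proof (intro conjI allI impI total[symmetric])
  fix S assume S: "S \<subseteq> I"
  have "(\<Sum>i\<in>S. lam i * a i) \<le> (\<Sum>i\<in>I. lam i * a i)"
    using assms(2,3) S by (intro sum_mono2[OF \<open>finite I\<close>]) auto
  moreover have "0 \<le> sum lam S" "sum lam S \<le> sum lam I"
    using assms(2) S by (force intro: sum_nonneg, force intro: sum_mono2[OF \<open>finite I\<close>])
  ultimately show "(\<Sum>i\<in>S. lam i * a i) \<le> integral {0..sum lam S} \<gamma>"
    using bound S lower[of "sum lam S"] by (auto simp: min_def split: if_splits)
qed

lemma majorized_p0_profile:
  fixes lam a :: "'i \<Rightarrow> real"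
  assumes "finite I" "\<forall>i\<in>I. lam i > 0" "\<forall>i\<in>I. 0 \<le> a i" "0 \<le> l"
    and bound: "\<forall>S\<subseteq>I. (\<Sum>i\<in>S. lam i * a i) \<le> 1 - exp (- sum lam S)"
    and total: "(\<Sum>i\<in>I. lam i * a i) = 1 - exp (- l)"
  shows "l \<le> sum lam I" "majorized I lam a (p0_profile l)"
proof -
  show l: "l \<le> sum lam I" using bound total by auto
  have integral: "integral {0..\<mu>} (p0_profile l) = 1 - exp (- min \<mu> l)" if "0 \<le> \<mu>" for \<mu>
    using has_integral_p0_profile[of 0 l \<mu>] that \<open>0 \<le> l\<close> by (simp add: integral_unique)
  show "majorized I lam a (p0_profile l)"
    using assms(1-3) bound
  proof (rule majorizedI)
    show "min (1 - exp (- \<mu>)) (\<Sum>i\<in>I. lam i * a i) \<le> integral {0..\<mu>} (p0_profile l)" if "0 \<le> \<mu>" for \<mu>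
      using integral[OF that] total by (auto simp: min_def)
  qed (use integral l \<open>0 \<le> l\<close> total in auto)
qed

lemma majorized_p1_profile_zero:
  fixes lam b :: "'i \<Rightarrow> real"
  assumes "finite I" "\<forall>i\<in>I. lam i > 0" "\<forall>i\<in>I. 0 \<le> b i" "0 \<le> l"
    and bound: "\<forall>S\<subseteq>I. (\<Sum>i\<in>S. lam i * b i) \<le> 2 - exp (- sum lam S) * (2 + sum lam S)"
    and total: "(\<Sum>i\<in>I. lam i * b i) = 2 - exp (- l) * (2 + l)"
  shows "l \<le> sum lam I" "majorized I lam b (p1_profile l (\<lambda>_. 0))"
proof -
  have "0 \<le> sum lam I" using assms(2) by (force intro: sum_nonneg)
  then show l: "l \<le> sum lam I"
    using bound total exp_neg_two_plus_strict_antimono[of "sum lam I" l] by force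
  have integral: "integral {0..\<mu>} (p1_profile l (\<lambda>_. 0)) = 2 - exp (- min \<mu> l) * (2 + min \<mu> l)"
    if "0 \<le> \<mu>" for \<mu>
    using has_integral_p1_profile[of \<mu> l] has_integral_p1_profile_beyond[OF \<open>0 \<le> l\<close>, of \<mu> _ 0] that
    by (cases "\<mu> \<le> l") (auto simp: integral_unique)
  show "majorized I lam b (p1_profile l (\<lambda>_. 0))"
    using assms(1-3) bound
  proof (rule majorizedI)
    show "min (2 - exp (- \<mu>) * (2 + \<mu>)) (\<Sum>i\<in>I. lam i * b i) \<le> integral {0..\<mu>} (p1_profile l (\<lambda>_. 0))"
      if "0 \<le> \<mu>" for \<mu>
      using integral[OF that] total by (auto simp: min_def)
  qed (use integral l \<open>0 \<le> l\<close> total in auto)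
qed

lemma majorized_p1_profile_p0:
  fixes lam a b :: "'i \<Rightarrow> real"
  assumes "finite I" "\<forall>i\<in>I. lam i > 0" "\<forall>i\<in>I. 0 \<le> a i \<and> a i \<le> b i"
    and l: "0 \<le> l2" "l2 < l1" "l1 \<le> sum lam I"
    and bound_a: "\<forall>S\<subseteq>I. (\<Sum>i\<in>S. lam i * a i) \<le> 1 - exp (- sum lam S)"
    and total_a: "(\<Sum>i\<in>I. lam i * a i) = 1 - exp (- l1)"
    and bound_b: "\<forall>S\<subseteq>I. (\<Sum>i\<in>S. lam i * b i) \<le> 2 - exp (- sum lam S) * (2 + sum lam S)"
    and total_b: "(\<Sum>i\<in>I. lam i * b i) = (1 - exp (- l1)) + (1 - exp (- l2) * (1 + l2))"
  shows "majorized I lam b (p1_profile l2 (p0_profile l1))"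
proof -
  let ?c = "1 - exp (- l2) * (1 + l2)"
  have bound: "(\<Sum>i\<in>S. lam i * b i) \<le> (1 - exp (- sum lam S)) + ?c" if S: "S \<subseteq> I" for S
  proof -
    have "(\<Sum>i\<in>S. lam i * (b i - a i)) \<le> (\<Sum>i\<in>I. lam i * (b i - a i))"
      using assms(2,3) S by (intro sum_mono2[OF \<open>finite I\<close>]) auto
    then show ?thesis
      using bound_a[rule_format, OF S] total_a total_b
      by (simp add: algebra_simps sum_subtractf)
  qed
  have integral: "integral {0..\<mu>} (p1_profile l2 (p0_profile l1)) =
      (if \<mu> \<le> l2 then 2 - exp (- \<mu>) * (2 + \<mu>) else (1 - exp (- min \<mu> l1)) + ?c)" if "0 \<le> \<mu>" for \<mu>
  proof (cases "\<mu> \<le> l2")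
    case False
    have "(p0_profile l1 has_integral exp (- l2) - exp (- min \<mu> l1)) {l2..\<mu>}"
      using False l by (intro has_integral_p0_profile) auto
    from has_integral_p1_profile_beyond[OF l(1) _ this] False show ?thesis
      by (simp add: integral_unique algebra_simps)
  qed (use has_integral_p1_profile[of \<mu> l2] that in \<open>simp add: integral_unique\<close>)
  show ?thesis
  proof (rule majorizedI[OF assms(1,2), where B = "\<lambda>\<mu>. min (2 - exp (- \<mu>) * (2 + \<mu>)) ((1 - exp (- \<mu>)) + ?c)"])
    show "\<forall>i\<in>I. 0 \<le> b i" using assms(3) by force
    show "\<forall>S\<subseteq>I. (\<Sum>i\<in>S. lam i * b i) \<le> min (2 - exp (- sum lam S) * (2 + sum lam S)) ((1 - exp (- sum lam S)) + ?c)"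
      using bound_b bound by auto
    show "min (min (2 - exp (- \<mu>) * (2 + \<mu>)) ((1 - exp (- \<mu>)) + ?c)) (\<Sum>i\<in>I. lam i * b i)
        \<le> integral {0..\<mu>} (p1_profile l2 (p0_profile l1))" if "0 \<le> \<mu>" for \<mu>
      using integral[OF that] total_b l by (cases "\<mu> \<le> l1") (auto simp: min_le_iff_disj)
    show "integral {0..sum lam I} (p1_profile l2 (p0_profile l1)) = (\<Sum>i\<in>I. lam i * b i)"
      using integral[of "sum lam I"] l total_b by auto
  qed
qed

context smooth_dr_submodular
begin

lemma axis_profiles_tight:
  assumes f00: "f (0, 0) = 0" and l: "0 \<le> l1" "l1 \<le> l2" and t: "0 \<le> t"
  shows "f (p0_profile l1 t, p1_profile l2 (\<lambda>_. 0) t)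
    = F1 (axis_curve_h (exp (- l1))) (p0_profile l1 t) + F2 (axis_curve_k (exp (- l1))) (p1_profile l2 (\<lambda>_. 0) t)"
proof -
  let ?x0 = "exp (- l1)"
  have x0: "0 < ?x0" "?x0 \<le> 1" using l by auto
  consider "t \<le> l1" | "l1 < t" "t \<le> l2" | "l2 < t" by linarith
  then show ?thesis
  proof cases
    case 1
    then have "axis_curve_h ?x0 (exp (- t)) = exp (- t) * (1 + t)"
      by (simp add: axis_curve_h_def max_absorb1 p1_of_p0_exp)
    then show ?thesis
      using 1 l t axis_curve_tight_graph[OF f00 x0, of "exp (- t)"]
      by (simp add: p0_profile_def p1_profile_def)
  next
    case 2
    have "exp (- t) * (1 + t) \<le> p1_of_p0 ?x0"
      using p1_of_p0_le_iff[of "exp (- t)" ?x0] 2 l by (simp add: p1_of_p0_exp)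
    then show ?thesis
      using 2 t axis_curve_tight_vertical[OF f00 x0] exp_neg_one_plus_bounds[of t]
      by (simp add: p0_profile_def p1_profile_def F1_def)
  qed (use f00 l in \<open>simp add: p0_profile_def p1_profile_def F1_def F2_def\<close>)
qed

lemma diag_profiles_tight:
  assumes f00: "f (0, 0) = 0" and l: "0 \<le> l2" "l2 < l1" and t: "0 \<le> t"
  shows "f (p0_profile l1 t, p1_profile l2 (p0_profile l1) t)
    = F1 (diag_curve_h (exp (- l2))) (p0_profile l1 t) + F2 (diag_curve_k (exp (- l2))) (p1_profile l2 (p0_profile l1) t)"
proof -
  let ?x0 = "exp (- l2)"
  have x0: "0 < ?x0" "?x0 \<le> 1" using l by auto
  consider "t \<le> l2" | "l2 < t" "t \<le> l1" | "l1 < t" by linarith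
  then show ?thesis
  proof cases
    case 1
    then have "diag_curve_h ?x0 (exp (- t)) = exp (- t) * (1 + t)"
      by (simp add: diag_curve_h_def p1_of_p0_exp)
    then show ?thesis
      using 1 l t diag_curve_tight_graph[OF f00 x0, of "exp (- t)"]
      by (simp add: p0_profile_def p1_profile_def)
  next
    case 2
    then show ?thesis
      using t diag_curve_tight_diagonal[OF f00 x0, of "exp (- t)"] by (simp add: p0_profile_def p1_profile_def)
  qed (use f00 l in \<open>simp add: p0_profile_def p1_profile_def F1_def F2_def\<close>)
qed

theorem poisson_lower_bound_le:
  assumes f00: "f (0, 0) = 0" and "finite I" and lam_pos: "\<forall>i\<in>I. lam i > 0"
    and a: "\<forall>i\<in>I. a i \<in> {0..1}" and b: "\<forall>i\<in>I. b i \<in> {0..1}"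
    and l: "0 \<le> l1" "l1 \<le> l2"
    and bound_a: "\<forall>S\<subseteq>I. (\<Sum>i\<in>S. lam i * a i) \<le> 1 - exp (- sum lam S)"
    and total_a: "(\<Sum>i\<in>I. lam i * a i) = 1 - exp (- l1)"
    and bound_b: "\<forall>S\<subseteq>I. (\<Sum>i\<in>S. lam i * b i) \<le> 2 - exp (- sum lam S) * (2 + sum lam S)"
    and total_b: "(\<Sum>i\<in>I. lam i * b i) = 2 - exp (- l2) * (2 + l2)"
  shows "integral {0..l1} (\<lambda>l. f (exp (- l), exp (- l) * (1 + l)))
           + integral {l1..l2} (\<lambda>l. f (0, exp (- l) * (1 + l)))
         \<le> (\<Sum>i\<in>I. lam i * f (a i, b i))"
proof -
  let ?L = "sum lam I" and ?x0 = "exp (- l1)" and ?\<gamma>1 = "p0_profile l1" and ?\<gamma>2 = "p1_profile l2 (\<lambda>_. 0)"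
  let ?h = "axis_curve_h ?x0" and ?k = "axis_curve_k ?x0"
  have x0: "0 < ?x0" "?x0 \<le> 1" using l by auto
  have l1_le: "l1 \<le> ?L" and maj_a: "majorized I lam a ?\<gamma>1"
    using majorized_p0_profile[OF \<open>finite I\<close> lam_pos _ l(1) bound_a total_a] a by auto
  have l2_le: "l2 \<le> ?L" and maj_b: "majorized I lam b ?\<gamma>2"
    using majorized_p1_profile_zero[OF \<open>finite I\<close> lam_pos _ _ bound_b total_b] b l by auto
  have prof: "profile_on {0..?L} ?\<gamma>1" "profile_on {0..?L} ?\<gamma>2"
    using l l1_le l2_le by (auto intro!: profile_on_p0_profile profile_on_p1_profile profile_on_zero)
  have tight: "f (?\<gamma>1 t, ?\<gamma>2 t) = F1 ?h (?\<gamma>1 t) + F2 ?k (?\<gamma>2 t)" if "t \<in> {0..?L}" for t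
    using axis_profiles_tight[OF f00 l, of t] that by simp
  have "integral {0..?L} (\<lambda>t. f (?\<gamma>1 t, ?\<gamma>2 t))
      = integral {0..l1} (\<lambda>t. f (?\<gamma>1 t, ?\<gamma>2 t)) + integral {l1..l2} (\<lambda>t. f (?\<gamma>1 t, ?\<gamma>2 t))
        + integral {l2..?L} (\<lambda>t. f (?\<gamma>1 t, ?\<gamma>2 t))"
    by (rule integral_split3[OF integrable_along_profiles[OF monotone_curve_axis[OF x0] prof tight] l l2_le])
  also have "integral {0..l1} (\<lambda>t. f (?\<gamma>1 t, ?\<gamma>2 t)) = integral {0..l1} (\<lambda>l. f (exp (- l), exp (- l) * (1 + l)))"
    using l by (intro integral_cong) (simp add: p0_profile_def p1_profile_def)
  also have "integral {l1..l2} (\<lambda>t. f (?\<gamma>1 t, ?\<gamma>2 t)) = integral {l1..l2} (\<lambda>l. f (0, exp (- l) * (1 + l)))"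
    by (intro integral_cong_on_interior) (simp add: p0_profile_def p1_profile_def)
  also have "integral {l2..?L} (\<lambda>t. f (?\<gamma>1 t, ?\<gamma>2 t)) = integral {l2..?L} (\<lambda>_. 0)"
    using l f00 by (intro integral_cong_on_interior) (simp add: p0_profile_def p1_profile_def)
  finally have "integral {0..?L} (\<lambda>t. f (?\<gamma>1 t, ?\<gamma>2 t))
      = integral {0..l1} (\<lambda>l. f (exp (- l), exp (- l) * (1 + l))) + integral {l1..l2} (\<lambda>l. f (0, exp (- l) * (1 + l)))"
    by simp
  moreover have "integral {0..?L} (\<lambda>t. f (?\<gamma>1 t, ?\<gamma>2 t)) \<le> (\<Sum>i\<in>I. lam i * f (a i, b i))"
    by (rule sum_ge_integral_along_profiles[OF monotone_curve_axis[OF x0] axis_curve_tight_graph[OF f00 x0]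
          \<open>finite I\<close> lam_pos a b prof maj_a maj_b tight])
  ultimately show ?thesis by simp
qed

theorem poisson_lower_bound_gt:
  assumes f00: "f (0, 0) = 0" and "finite I" and lam_pos: "\<forall>i\<in>I. lam i > 0"
    and a: "\<forall>i\<in>I. a i \<in> {0..1}" and b: "\<forall>i\<in>I. b i \<in> {0..1}" and ab: "\<forall>i\<in>I. a i \<le> b i"
    and l: "0 \<le> l2" "l2 < l1"
    and bound_a: "\<forall>S\<subseteq>I. (\<Sum>i\<in>S. lam i * a i) \<le> 1 - exp (- sum lam S)"
    and total_a: "(\<Sum>i\<in>I. lam i * a i) = 1 - exp (- l1)"
    and bound_b: "\<forall>S\<subseteq>I. (\<Sum>i\<in>S. lam i * b i) \<le> 2 - exp (- sum lam S) * (2 + sum lam S)"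
    and total_b: "(\<Sum>i\<in>I. lam i * b i) = (1 - exp (- l1)) + (1 - exp (- l2) * (1 + l2))"
  shows "integral {0..l2} (\<lambda>l. f (exp (- l), exp (- l) * (1 + l)))
           + integral {l2..l1} (\<lambda>l. f (exp (- l), exp (- l)))
         \<le> (\<Sum>i\<in>I. lam i * f (a i, b i))"
proof -
  let ?L = "sum lam I" and ?x0 = "exp (- l2)" and ?\<gamma>1 = "p0_profile l1" and ?\<gamma>2 = "p1_profile l2 (p0_profile l1)"
  let ?h = "diag_curve_h ?x0" and ?k = "diag_curve_k ?x0"
  have x0: "0 < ?x0" "?x0 \<le> 1" using l by auto
  have l1_le: "l1 \<le> ?L" and maj_a: "majorized I lam a ?\<gamma>1"
    using majorized_p0_profile[OF \<open>finite I\<close> lam_pos _ _ bound_a total_a] a l by auto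
  have maj_b: "majorized I lam b ?\<gamma>2"
    using majorized_p1_profile_p0[OF \<open>finite I\<close> lam_pos _ l l1_le bound_a total_a bound_b total_b] a ab
    by auto
  have prof: "profile_on {0..?L} ?\<gamma>1" "profile_on {0..?L} ?\<gamma>2"
    using l l1_le by (auto intro!: profile_on_p0_profile profile_on_p1_profile)
  have tight: "f (?\<gamma>1 t, ?\<gamma>2 t) = F1 ?h (?\<gamma>1 t) + F2 ?k (?\<gamma>2 t)" if "t \<in> {0..?L}" for t
    using diag_profiles_tight[OF f00 l, of t] that by simp
  have "integral {0..?L} (\<lambda>t. f (?\<gamma>1 t, ?\<gamma>2 t))
      = integral {0..l2} (\<lambda>t. f (?\<gamma>1 t, ?\<gamma>2 t)) + integral {l2..l1} (\<lambda>t. f (?\<gamma>1 t, ?\<gamma>2 t))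
        + integral {l1..?L} (\<lambda>t. f (?\<gamma>1 t, ?\<gamma>2 t))"
    using l l1_le
    by (intro integral_split3[OF integrable_along_profiles[OF monotone_curve_diag[OF x0] prof tight]]) auto
  also have "integral {0..l2} (\<lambda>t. f (?\<gamma>1 t, ?\<gamma>2 t)) = integral {0..l2} (\<lambda>l. f (exp (- l), exp (- l) * (1 + l)))"
    using l by (intro integral_cong) (simp add: p0_profile_def p1_profile_def)
  also have "integral {l2..l1} (\<lambda>t. f (?\<gamma>1 t, ?\<gamma>2 t)) = integral {l2..l1} (\<lambda>l. f (exp (- l), exp (- l)))"
    by (intro integral_cong_on_interior) (simp add: p0_profile_def p1_profile_def)
  also have "integral {l1..?L} (\<lambda>t. f (?\<gamma>1 t, ?\<gamma>2 t)) = integral {l1..?L} (\<lambda>_. 0)"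
    using l f00 by (intro integral_cong_on_interior) (simp add: p0_profile_def p1_profile_def)
  finally have "integral {0..?L} (\<lambda>t. f (?\<gamma>1 t, ?\<gamma>2 t))
      = integral {0..l2} (\<lambda>l. f (exp (- l), exp (- l) * (1 + l))) + integral {l2..l1} (\<lambda>l. f (exp (- l), exp (- l)))"
    by simp
  moreover have "integral {0..?L} (\<lambda>t. f (?\<gamma>1 t, ?\<gamma>2 t)) \<le> (\<Sum>i\<in>I. lam i * f (a i, b i))"
    by (rule sum_ge_integral_along_profiles[OF monotone_curve_diag[OF x0] diag_curve_tight_graph[OF f00 x0]
          \<open>finite I\<close> lam_pos a b prof maj_a maj_b tight])
  ultimately show ?thesis by simp
qed

end

lemma poissonP_0: "poissonP 0 l = exp (- l)"
  and poissonP_1: "poissonP 1 l = exp (- l) * (1 + l)"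
  by (simp_all add: poissonP_def)

lemma dr_submodular_smooth:
  assumes "dr_submodular f"
  obtains f1 f2 f11 f12 f21 f22 where "smooth_dr_submodular f f1 f2 f11 f12 f21 f22"
proof -
  from assms obtain f1 f2 f11 f12 f21 f22 :: "real \<times> real \<Rightarrow> real" where
    "\<forall>p\<in>unit_sq.
       (f has_derivative (\<lambda>(h, k). f1 p * h + f2 p * k)) (at p within unit_sq) \<and>
       (f1 has_derivative (\<lambda>(h, k). f11 p * h + f12 p * k)) (at p within unit_sq) \<and>
       (f2 has_derivative (\<lambda>(h, k). f21 p * h + f22 p * k)) (at p within unit_sq) \<and>
       f11 p \<le> 0 \<and> f12 p \<le> 0 \<and> f21 p \<le> 0 \<and> f22 p \<le> 0"
    unfolding dr_submodular_def by blast
  then have "smooth_dr_submodular f f1 f2 f11 f12 f21 f22"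
    unfolding smooth_dr_submodular_def by blast
  then show thesis by (rule that)
qed

lemma in_PM2_polytope_two_columns:
  fixes x :: "'i \<Rightarrow> 'j \<Rightarrow> real"
  assumes "finite J" "\<forall>i\<in>I. lam i > 0" "in_PM2_polytope I J E lam x" "j1 \<in> J" "j2 \<in> J" "j1 \<noteq> j2"
  shows "\<forall>i\<in>I. x i j1 / lam i \<in> {0..1}" "\<forall>i\<in>I. x i j1 / lam i + x i j2 / lam i \<in> {0..1}"
    and "\<forall>i\<in>I. x i j1 / lam i \<le> x i j1 / lam i + x i j2 / lam i"
    and "\<And>S. S \<subseteq> I \<Longrightarrow> (\<Sum>i\<in>S. lam i * (x i j1 / lam i)) = (\<Sum>i\<in>S. x i j1)"
    and "\<And>S. S \<subseteq> I \<Longrightarrow> (\<Sum>i\<in>S. lam i * (x i j1 / lam i + x i j2 / lam i)) = (\<Sum>i\<in>S. x i j1) + (\<Sum>i\<in>S. x i j2)"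
    and "\<forall>S\<subseteq>I. (\<Sum>i\<in>S. lam i * (x i j1 / lam i)) \<le> 1 - exp (- sum lam S)"
    and "\<forall>S\<subseteq>I. (\<Sum>i\<in>S. lam i * (x i j1 / lam i + x i j2 / lam i)) \<le> 2 - exp (- sum lam S) * (2 + sum lam S)"
proof -
  note P = assms(3)[unfolded in_PM2_polytope_def poissonP_0 poissonP_1]
  have x_nonneg: "\<forall>i\<in>I. \<forall>j\<in>J. 0 \<le> x i j"
    using P by (rule conjunct1)
  have row: "\<forall>i\<in>I. (\<Sum>j\<in>J. x i j) \<le> lam i"
    using P[THEN conjunct2, THEN conjunct2] by (rule conjunct1)
  have col: "\<forall>S\<subseteq>I. \<forall>j\<in>J. (\<Sum>i\<in>S. x i j) \<le> 1 - exp (- sum lam S)"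
    using P[THEN conjunct2, THEN conjunct2, THEN conjunct2] by (rule conjunct1)
  have pair: "\<forall>S\<subseteq>I. \<forall>j\<in>J. \<forall>j'\<in>J. j \<noteq> j' \<longrightarrow>
       (\<Sum>i\<in>S. x i j + x i j') \<le> (1 - exp (- sum lam S)) + (1 - exp (- sum lam S) * (1 + sum lam S))"
    using P[THEN conjunct2, THEN conjunct2, THEN conjunct2] by (rule conjunct2)
  have nonneg: "0 \<le> x i j1" "0 \<le> x i j2" if "i \<in> I" for i using x_nonneg assms(4,5) that by auto
  have ranges: "0 \<le> x i j1 / lam i" "0 \<le> x i j2 / lam i" "x i j1 / lam i + x i j2 / lam i \<le> 1"
    if i: "i \<in> I" for i
  proof -
    have "(\<Sum>j\<in>{j1, j2}. x i j) \<le> (\<Sum>j\<in>J. x i j)"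
      using x_nonneg assms(1,4,5) i by (intro sum_mono2) auto
    then have "x i j1 + x i j2 \<le> lam i" using row i assms(6) by force
    moreover have "0 < lam i" using assms(2) i by blast
    ultimately show "0 \<le> x i j1 / lam i" "0 \<le> x i j2 / lam i" "x i j1 / lam i + x i j2 / lam i \<le> 1"
      using nonneg[OF i] by (simp_all add: add_divide_distrib[symmetric])
  qed
  then show "\<forall>i\<in>I. x i j1 / lam i \<in> {0..1}" "\<forall>i\<in>I. x i j1 / lam i + x i j2 / lam i \<in> {0..1}"
    "\<forall>i\<in>I. x i j1 / lam i \<le> x i j1 / lam i + x i j2 / lam i"
    by (fastforce+)
  have lam_nz: "lam i \<noteq> 0" if "i \<in> I" for i using assms(2) that by force
  show sum_a: "(\<Sum>i\<in>S. lam i * (x i j1 / lam i)) = (\<Sum>i\<in>S. x i j1)" if "S \<subseteq> I" for S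
    using lam_nz that by (intro sum.cong) auto
  show sum_b: "(\<Sum>i\<in>S. lam i * (x i j1 / lam i + x i j2 / lam i)) = (\<Sum>i\<in>S. x i j1) + (\<Sum>i\<in>S. x i j2)"
    if "S \<subseteq> I" for S
    unfolding sum.distrib[symmetric] using lam_nz that by (intro sum.cong) (auto simp: distrib_left)
  show "\<forall>S\<subseteq>I. (\<Sum>i\<in>S. lam i * (x i j1 / lam i)) \<le> 1 - exp (- sum lam S)"
    using col sum_a assms(4) by auto
  show "\<forall>S\<subseteq>I. (\<Sum>i\<in>S. lam i * (x i j1 / lam i + x i j2 / lam i)) \<le> 2 - exp (- sum lam S) * (2 + sum lam S)"
  proof (intro allI impI)
    fix S assume S: "S \<subseteq> I"
    have "(\<Sum>i\<in>S. x i j1 + x i j2) \<le> (1 - exp (- sum lam S)) + (1 - exp (- sum lam S) * (1 + sum lam S))"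
      using pair S assms(4-6) by blast
    then show "(\<Sum>i\<in>S. lam i * (x i j1 / lam i + x i j2 / lam i)) \<le> 2 - exp (- sum lam S) * (2 + sum lam S)"
      using sum_b[OF S] by (simp add: sum.distrib algebra_simps)
  qed
qed

theorem mainTheorem10:
  fixes I :: "'i set" and J :: "'j set" and E :: "('i \<times> 'j) set"
    and lam :: "'i \<Rightarrow> real" and x :: "'i \<Rightarrow> 'j \<Rightarrow> real"
    and f :: "real \<times> real \<Rightarrow> real"
    and j1 j2 :: 'j and l1 l2 :: real
  assumes "finite I" and "finite J" and "E \<subseteq> I \<times> J"
    and "\<forall>i\<in>I. lam i > 0"
    and "in_PM2_polytope I J E lam x"
    and "normalized f" and "dr_submodular f"
    and "j1 \<in> J" and "j2 \<in> J" and "j1 \<noteq> j2"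
    and "l1 \<ge> 0" and "l2 \<ge> 0"
    and "(\<Sum>i\<in>I. x i j1) = 1 - poissonP 0 l1"
    and "(\<Sum>i\<in>I. x i j2) =
           (2 - poissonP 0 l2 - poissonP 1 l2) - (1 - poissonP 0 (min l1 l2))"
  shows "(l1 \<le> l2 \<longrightarrow>
           (\<Sum>i\<in>I. lam i * f (x i j1 / lam i, x i j1 / lam i + x i j2 / lam i))
             \<ge> integral {0..l1} (\<lambda>l. f (poissonP 0 l, poissonP 1 l))
               + integral {l1..l2} (\<lambda>l. f (0, poissonP 1 l)))
       \<and> (l1 > l2 \<longrightarrow>
           (\<Sum>i\<in>I. lam i * f (x i j1 / lam i, x i j1 / lam i + x i j2 / lam i))
             \<ge> integral {0..l2} (\<lambda>l. f (poissonP 0 l, poissonP 1 l))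
               + integral {l2..l1} (\<lambda>l. f (poissonP 0 l, poissonP 0 l)))"
proof -
  obtain f1 f2 f11 f12 f21 f22 where "smooth_dr_submodular f f1 f2 f11 f12 f21 f22"
    using \<open>dr_submodular f\<close> by (rule dr_submodular_smooth)
  then interpret smooth_dr_submodular f f1 f2 f11 f12 f21 f22 .
  have f00: "f (0, 0) = 0" using \<open>normalized f\<close> unfolding normalized_def .
  note cols = in_PM2_polytope_two_columns[OF assms(2,4,5,8-10)]
  have total_a: "(\<Sum>i\<in>I. lam i * (x i j1 / lam i)) = 1 - exp (- l1)"
    using cols(4)[of I] assms(13) unfolding poissonP_0 by simp
  have total_b: "(\<Sum>i\<in>I. lam i * (x i j1 / lam i + x i j2 / lam i))
      = (1 - exp (- l1)) + (2 - exp (- l2) - exp (- l2) * (1 + l2)) - (1 - exp (- min l1 l2))"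
    using cols(5)[of I] assms(13,14) unfolding poissonP_0 poissonP_1 by simp
  show ?thesis
  proof (intro conjI impI)
    assume "l1 \<le> l2"
    with poisson_lower_bound_le[OF f00 assms(1,4) cols(1,2) assms(11) _ cols(6) total_a cols(7)] total_b
    show "integral {0..l1} (\<lambda>l. f (poissonP 0 l, poissonP 1 l)) + integral {l1..l2} (\<lambda>l. f (0, poissonP 1 l))
        \<le> (\<Sum>i\<in>I. lam i * f (x i j1 / lam i, x i j1 / lam i + x i j2 / lam i))"
      unfolding poissonP_0 poissonP_1 by (simp add: algebra_simps)
  next
    assume "l2 < l1"
    with poisson_lower_bound_gt[OF f00 assms(1,4) cols(1-3) assms(12) _ cols(6) total_a cols(7)] total_b
    show "integral {0..l2} (\<lambda>l. f (poissonP 0 l, poissonP 1 l)) + integral {l2..l1} (\<lambda>l. f (poissonP 0 l, poissonP 0 l))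
        \<le> (\<Sum>i\<in>I. lam i * f (x i j1 / lam i, x i j1 / lam i + x i j2 / lam i))"
      unfolding poissonP_0 poissonP_1 by (simp add: algebra_simps)
  qed
qed

end
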